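(* Let $x=(x_1,\dots,x_n)$ be variables, $f=(f_1,\dots,f_n)$ differential-free terms such that the ODE $x'=f(x)$ locally evolves $x$ (in every state the value of $f$ is not the zero vector), $P$ and $Q$ semianalytic formulas, and $y=(y_1,\dots,y_n)$ variables fresh in $[x'=f(x)\,\&\,Q]P$. Then the formula $$[x'=f(x)\&Q]P\;\leftrightarrow\;\forall y\,[x'=f(x)\,\&\,Q\wedge(P\vee x=y)]\Big(x=y\rightarrow P\wedge\big(\langle x'=f(x)\&Q\vee x=y\rangle x\neq y\rightarrow\langle x'=f(x)\&P\vee x=y\rangle x\neq y\big)\Big)$$ is valid.
   Context: Variables are real-valued; each variable $x$ has a differential variable $x'$. A state is a map from variables to $\mathbb{R}$. Terms are built from variables, rational constants, $+$, $\cdot$ and finitely many fixed function symbols interpreted as $C^\infty$ functions $\mathbb{R}^k\to\mathbb{R}$, evaluated as usual; differential-free terms contain no differential variables. Semianalytic formulas are built from comparisons $e\sim\tilde e$ ($\sim\in\{=,\ge,>\}$) of differential-free terms by $\wedge,\vee,\neg$. For vectors, $x=y$ abbreviates $\bigwedge_i x_i=y_i$, $x\neq y$ its negation, and $\forall y$ quantifies all $y_i$. Semantics of ODEs: $(\omega,\nu)\in[\![x'=f(x)\&R]\!]$ iff there are $T\ge0$ and $\varphi:[0,T]\to$ states with $\varphi(0)=\omega$ on all variables except $x'$, $\varphi(T)=\nu$, and for all $\zeta\in[0,T]$: $\varphi(\zeta)$ satisfies $x'=f(x)\wedge R$, $\varphi(\zeta)$ agrees with $\varphi(0)$ on variables other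 than $x,x'$, and, if $T>0$, $t\mapsto\varphi(t)(x)$ is differentiable at $\zeta$ with derivative $\varphi(\zeta)(x')$. $\omega\models[\alpha]\phi$ iff $\nu\models\phi$ for all $\nu$ with $(\omega,\nu)\in[\![\alpha]\!]$; $\omega\models\langle\alpha\rangle\phi$ iff $\nu\models\phi$ for some such $\nu$. A formula is valid if true in all states. *)

theory Defs
  imports Complex_Main
begin

datatype 'v var = Plain 'v | Diff 'v

type_synonym 'v state = "'v var \<Rightarrow> real"

datatype ('v, 'f) trm =
    Var 'v
  | DVar 'v
  | Const rat
  | Plus "('v, 'f) trm" "('v, 'f) trm"
  | Times "('v, 'f) trm" "('v, 'f) trm"
  | Fn 'f "('v, 'f) trm list"

fun teval :: "('f \<Rightarrow> real list \<Rightarrow> real) \<Rightarrow> ('v, 'f) trm \<Rightarrow> 'v state \<Rightarrow> real" where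
  "teval I (Var v) \<omega> = \<omega> (Plain v)"
| "teval I (DVar v) \<omega> = \<omega> (Diff v)"
| "teval I (Const c) \<omega> = of_rat c"
| "teval I (Plus a b) \<omega> = teval I a \<omega> + teval I b \<omega>"
| "teval I (Times a b) \<omega> = teval I a \<omega> * teval I b \<omega>"
| "teval I (Fn g as) \<omega> = I g (map (\<lambda>a. teval I a \<omega>) as)"

fun dfree :: "('v, 'f) trm \<Rightarrow> bool" where
  "dfree (DVar v) = False"
| "dfree (Plus a b) = (dfree a \<and> dfree b)"
| "dfree (Times a b) = (dfree a \<and> dfree b)"
| "dfree (Fn g as) = (\<forall>a\<in>set as. dfree a)"
| "dfree _ = True"

fun twf :: "('f \<Rightarrow> nat) \<Rightarrow> ('v, 'f) trm \<Rightarrow> bool" where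
  "twf ar (Plus a b) = (twf ar a \<and> twf ar b)"
| "twf ar (Times a b) = (twf ar a \<and> twf ar b)"
| "twf ar (Fn g as) = (length as = ar g \<and> (\<forall>a\<in>set as. twf ar a))"
| "twf ar _ = True"

fun tvars :: "('v, 'f) trm \<Rightarrow> 'v var set" where
  "tvars (Var v) = {Plain v}"
| "tvars (DVar v) = {Diff v}"
| "tvars (Const c) = {}"
| "tvars (Plus a b) = tvars a \<union> tvars b"
| "tvars (Times a b) = tvars a \<union> tvars b"
| "tvars (Fn g as) = \<Union> (tvars ` set as)"

definition partial_l :: "nat \<Rightarrow> (real list \<Rightarrow> real) \<Rightarrow> real list \<Rightarrow> real" where
  "partial_l i g = (\<lambda>xs. THE D. ((\<lambda>t. g (xs[i := t])) has_real_derivative D) (at (xs ! i)))"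

fun partials_l :: "nat list \<Rightarrow> (real list \<Rightarrow> real) \<Rightarrow> real list \<Rightarrow> real" where
  "partials_l [] g = g"
| "partials_l (i # is) g = partial_l i (partials_l is g)"

definition lcont :: "nat \<Rightarrow> (real list \<Rightarrow> real) \<Rightarrow> real list \<Rightarrow> bool" where
  "lcont k h xs \<longleftrightarrow>
     (\<forall>X. (\<forall>m. length (X m) = k) \<longrightarrow> (\<forall>i<k. (\<lambda>m. X m ! i) \<longlonglongrightarrow> xs ! i)
          \<longrightarrow> (\<lambda>m. h (X m)) \<longlonglongrightarrow> h xs)"

definition smooth_fn :: "nat \<Rightarrow> (real list \<Rightarrow> real) \<Rightarrow> bool" where
  "smooth_fn k g \<longleftrightarrow>
     (\<forall>is. set is \<subseteq> {..<k} \<longrightarrow>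
        (\<forall>xs. length xs = k \<longrightarrow>
           lcont k (partials_l is g) xs \<and>
           (\<forall>i<k. (\<lambda>t. partials_l is g (xs[i := t])) differentiable (at (xs ! i)))))"

datatype cmp = Eq | Geq | Gt

fun cmp_sem :: "cmp \<Rightarrow> real \<Rightarrow> real \<Rightarrow> bool" where
  "cmp_sem Eq a b = (a = b)"
| "cmp_sem Geq a b = (a \<ge> b)"
| "cmp_sem Gt a b = (a > b)"

text \<open>Box xs fs R P is [x'=f(x) & R]P with x = xs, f = fs; similarly Dia.\<close>
datatype ('v, 'f) fml =
    Cmp "('v, 'f) trm" cmp "('v, 'f) trm"
  | Not "('v, 'f) fml"
  | And "('v, 'f) fml" "('v, 'f) fml"
  | Or "('v, 'f) fml" "('v, 'f) fml"
  | Forall 'v "('v, 'f) fml"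
  | Box "'v list" "('v, 'f) trm list" "('v, 'f) fml" "('v, 'f) fml"
  | Dia "'v list" "('v, 'f) trm list" "('v, 'f) fml" "('v, 'f) fml"

definition Imp :: "('v, 'f) fml \<Rightarrow> ('v, 'f) fml \<Rightarrow> ('v, 'f) fml" where
  "Imp a b = Or (Not a) b"

definition Iff :: "('v, 'f) fml \<Rightarrow> ('v, 'f) fml \<Rightarrow> ('v, 'f) fml" where
  "Iff a b = And (Imp a b) (Imp b a)"

fun ForallV :: "'v list \<Rightarrow> ('v, 'f) fml \<Rightarrow> ('v, 'f) fml" where
  "ForallV [] p = p"
| "ForallV (y # ys) p = Forall y (ForallV ys p)"

fun EqV :: "'v list \<Rightarrow> 'v list \<Rightarrow> ('v, 'f) fml" where
  "EqV [x] [y] = Cmp (Var x) Eq (Var y)"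
| "EqV (x # xs) (y # ys) = And (Cmp (Var x) Eq (Var y)) (EqV xs ys)"
| "EqV _ _ = Cmp (Const 0) Eq (Const 0)"

definition NeqV :: "'v list \<Rightarrow> 'v list \<Rightarrow> ('v, 'f) fml" where
  "NeqV xs ys = Not (EqV xs ys)"

definition ode_rel :: "('f \<Rightarrow> real list \<Rightarrow> real) \<Rightarrow> 'v list \<Rightarrow> ('v, 'f) trm list
    \<Rightarrow> ('v state \<Rightarrow> bool) \<Rightarrow> 'v state \<Rightarrow> 'v state \<Rightarrow> bool" where
  "ode_rel I xs fs Rs \<omega> \<nu> \<longleftrightarrow>
     (\<exists>T::real. T \<ge> 0 \<and> (\<exists>\<phi> :: real \<Rightarrow> 'v state.
        (\<forall>z. z \<notin> Diff ` set xs \<longrightarrow> \<phi> 0 z = \<omega> z) \<and>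
        \<phi> T = \<nu> \<and>
        (\<forall>\<zeta>\<in>{0..T}.
           (\<forall>i<length xs. \<phi> \<zeta> (Diff (xs ! i)) = teval I (fs ! i) (\<phi> \<zeta>)) \<and>
           Rs (\<phi> \<zeta>) \<and>
           (\<forall>z. z \<notin> Plain ` set xs \<union> Diff ` set xs \<longrightarrow> \<phi> \<zeta> z = \<phi> 0 z) \<and>
           (T > 0 \<longrightarrow> (\<forall>i<length xs.
              ((\<lambda>t. \<phi> t (Plain (xs ! i))) has_real_derivative \<phi> \<zeta> (Diff (xs ! i)))
                (at \<zeta> within {0..T}))))))"

fun sem :: "('f \<Rightarrow> real list \<Rightarrow> real) \<Rightarrow> ('v, 'f) fml \<Rightarrow> 'v state \<Rightarrow> bool" where
  "sem I (Cmp a c b) \<omega> = cmp_sem c (teval I a \<omega>) (teval I b \<omega>)"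
| "sem I (Not p) \<omega> = (\<not> sem I p \<omega>)"
| "sem I (And p q) \<omega> = (sem I p \<omega> \<and> sem I q \<omega>)"
| "sem I (Or p q) \<omega> = (sem I p \<omega> \<or> sem I q \<omega>)"
| "sem I (Forall y p) \<omega> = (\<forall>r. sem I p (\<omega>(Plain y := r)))"
| "sem I (Box xs fs R p) \<omega> = (\<forall>\<nu>. ode_rel I xs fs (sem I R) \<omega> \<nu> \<longrightarrow> sem I p \<nu>)"
| "sem I (Dia xs fs R p) \<omega> = (\<exists>\<nu>. ode_rel I xs fs (sem I R) \<omega> \<nu> \<and> sem I p \<nu>)"

definition valid :: "('f \<Rightarrow> real list \<Rightarrow> real) \<Rightarrow> ('v, 'f) fml \<Rightarrow> bool" where
  "valid I p \<longleftrightarrow> (\<forall>\<omega>. sem I p \<omega>)"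

fun semianalytic :: "('v, 'f) fml \<Rightarrow> bool" where
  "semianalytic (Cmp a c b) = (dfree a \<and> dfree b)"
| "semianalytic (Not p) = semianalytic p"
| "semianalytic (And p q) = (semianalytic p \<and> semianalytic q)"
| "semianalytic (Or p q) = (semianalytic p \<and> semianalytic q)"
| "semianalytic _ = False"

fun fwf :: "('f \<Rightarrow> nat) \<Rightarrow> ('v, 'f) fml \<Rightarrow> bool" where
  "fwf ar (Cmp a c b) = (twf ar a \<and> twf ar b)"
| "fwf ar (Not p) = fwf ar p"
| "fwf ar (And p q) = (fwf ar p \<and> fwf ar q)"
| "fwf ar (Or p q) = (fwf ar p \<and> fwf ar q)"
| "fwf ar (Forall y p) = fwf ar p"
| "fwf ar (Box xs fs R p) = ((\<forall>f\<in>set fs. twf ar f) \<and> fwf ar R \<and> fwf ar p)"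
| "fwf ar (Dia xs fs R p) = ((\<forall>f\<in>set fs. twf ar f) \<and> fwf ar R \<and> fwf ar p)"

fun fvars :: "('v, 'f) fml \<Rightarrow> 'v var set" where
  "fvars (Cmp a c b) = tvars a \<union> tvars b"
| "fvars (Not p) = fvars p"
| "fvars (And p q) = fvars p \<union> fvars q"
| "fvars (Or p q) = fvars p \<union> fvars q"
| "fvars (Forall y p) = insert (Plain y) (fvars p)"
| "fvars (Box xs fs R p) = Plain ` set xs \<union> Diff ` set xs \<union> \<Union> (tvars ` set fs) \<union> fvars R \<union> fvars p"
| "fvars (Dia xs fs R p) = Plain ` set xs \<union> Diff ` set xs \<union> \<Union> (tvars ` set fs) \<union> fvars R \<union> fvars p"

definition fresh_in :: "'v \<Rightarrow> ('v, 'f) fml \<Rightarrow> bool" where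
  "fresh_in y p \<longleftrightarrow> Plain y \<notin> fvars p \<and> Diff y \<notin> fvars p"

end

theory Submission
  imports Defs "HOL-Analysis.Analysis"
begin

text \<open>Forward direction: a run of the ghost system that ends where x = y is a run of
  x' = f(x) & Q, so P holds there. A run from that state in Q \<or> x = y leaves x = y at once, because
  the ODE moves some x_i while the ghosts y stay put; for a while it is therefore a run in Q, and
  appending its prefixes to the first run shows that P holds along it.

  Converse: if a run in Q reached \<not>P, let t0 be the infimum of the times where P fails and place
  the ghosts at x(t0). The ghost run up to t0 stays in P \<or> x = y, so the right-hand side yields P
  at t0 and, as the Q-run leaves x = y after t0, some run in P \<or> x = y that leaves x = y. The
  function symbols are smooth, so the ODE is locally Lipschitz and its solutions are locally unique:
  this run coincides with the Q-run right after t0, contradicting that the failures of P accumulate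
  at t0 from the right.\<close>

section \<open>Coincidence\<close>

lemma teval_cong:
  "(\<And>z. z \<in> tvars t \<Longrightarrow> a z = b z) \<Longrightarrow> teval I t a = teval I t b"
proof (induction t)
  case (Fn g as)
  then show ?case by (auto intro!: arg_cong[where f = "I g"] map_cong)
qed auto

lemma tvars_dfree: "dfree t \<Longrightarrow> tvars t \<subseteq> range Plain"
  by (induction t) auto

lemma teval_dfree_cong:
  "dfree t \<Longrightarrow> (\<And>v. a (Plain v) = b (Plain v)) \<Longrightarrow> teval I t a = teval I t b"
  by (rule teval_cong) (use tvars_dfree in auto)

lemma fvars_semianalytic: "semianalytic p \<Longrightarrow> fvars p \<subseteq> range Plain"
  by (induction p) (use tvars_dfree in auto)

lemma sem_semianalytic_cong:
  "semianalytic p \<Longrightarrow> (\<And>z. z \<in> fvars p \<Longrightarrow> a z = b z) \<Longrightarrow> sem I p a = sem I p b"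
proof (induction p)
  case (Cmp x c y)
  then show ?case using teval_cong[of x a b I] teval_cong[of y a b I] by auto
qed auto

lemma sem_semianalytic_Plain_cong:
  "semianalytic p \<Longrightarrow> (\<And>v. a (Plain v) = b (Plain v)) \<Longrightarrow> sem I p a = sem I p b"
  by (rule sem_semianalytic_cong) (use fvars_semianalytic in auto)

lemma sem_override_on_fresh:
  "semianalytic p \<Longrightarrow> fvars p \<inter> W = {} \<Longrightarrow> sem I p (override_on s c W) = sem I p s"
  by (rule sem_semianalytic_cong) (auto simp: override_on_def)

lemma sem_Imp [simp]: "sem I (Imp a b) s \<longleftrightarrow> (sem I a s \<longrightarrow> sem I b s)"
  by (simp add: Imp_def)

lemma sem_Iff [simp]: "sem I (Iff a b) s \<longleftrightarrow> (sem I a s \<longleftrightarrow> sem I b s)"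
  by (auto simp: Iff_def)

lemma sem_NeqV [simp]: "sem I (NeqV a b) s \<longleftrightarrow> \<not> sem I (EqV a b) s"
  by (simp add: NeqV_def)

lemma sem_EqV:
  "length xs = length ys \<Longrightarrow>
   sem I (EqV xs ys) s \<longleftrightarrow> (\<forall>i<length xs. s (Plain (xs ! i)) = s (Plain (ys ! i)))"
  by (induction xs ys rule: EqV.induct) (auto simp: All_less_Suc2)

lemma sem_ForallV:
  "sem I (ForallV ys p) \<omega> \<longleftrightarrow>
   (\<forall>\<omega>'. (\<forall>z. z \<notin> Plain ` set ys \<longrightarrow> \<omega>' z = \<omega> z) \<longrightarrow> sem I p \<omega>')"
proof (induction ys arbitrary: \<omega>)
  case Nil
  then show ?case by (simp flip: fun_eq_iff)
next
  case (Cons y ys)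
  have "sem I (ForallV (y # ys) p) \<omega> \<longleftrightarrow>
    (\<forall>r \<omega>'. (\<forall>z. z \<notin> Plain ` set ys \<longrightarrow> \<omega>' z = fun_upd \<omega> (Plain y) r z) \<longrightarrow> sem I p \<omega>')"
    using Cons.IH by simp
  also have "\<dots> \<longleftrightarrow> (\<forall>\<omega>'. (\<forall>z. z \<notin> Plain ` set (y # ys) \<longrightarrow> \<omega>' z = \<omega> z) \<longrightarrow> sem I p \<omega>')"
  proof (intro iffI allI impI)
    fix \<omega>'
    assume H: "\<forall>r \<omega>'. (\<forall>z. z \<notin> Plain ` set ys \<longrightarrow> \<omega>' z = fun_upd \<omega> (Plain y) r z) \<longrightarrow> sem I p \<omega>'"
      and agree: "\<forall>z. z \<notin> Plain ` set (y # ys) \<longrightarrow> \<omega>' z = \<omega> z"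
    have "\<forall>z. z \<notin> Plain ` set ys \<longrightarrow> \<omega>' z = fun_upd \<omega> (Plain y) (\<omega>' (Plain y)) z"
      using agree by auto
    then show "sem I p \<omega>'" using H by blast
  next
    fix r \<omega>'
    assume H: "\<forall>\<omega>'. (\<forall>z. z \<notin> Plain ` set (y # ys) \<longrightarrow> \<omega>' z = \<omega> z) \<longrightarrow> sem I p \<omega>'"
      and agree: "\<forall>z. z \<notin> Plain ` set ys \<longrightarrow> \<omega>' z = fun_upd \<omega> (Plain y) r z"
    have "\<forall>z. z \<notin> Plain ` set (y # ys) \<longrightarrow> \<omega>' z = \<omega> z"
      using agree by auto
    then show "sem I p \<omega>'" using H by blast
  qed
  finally show ?case .
qed

section \<open>Solutions of differential equations\<close>

definition ode_solution :: "('f \<Rightarrow> real list \<Rightarrow> real) \<Rightarrow> 'v list \<Rightarrow> ('v, 'f) trm list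
    \<Rightarrow> ('v state \<Rightarrow> bool) \<Rightarrow> real \<Rightarrow> (real \<Rightarrow> 'v state) \<Rightarrow> bool" where
  "ode_solution I xs fs R T \<phi> \<longleftrightarrow> T \<ge> 0 \<and>
     (\<forall>\<zeta>\<in>{0..T}.
        (\<forall>i<length xs. \<phi> \<zeta> (Diff (xs ! i)) = teval I (fs ! i) (\<phi> \<zeta>)) \<and>
        R (\<phi> \<zeta>) \<and>
        (\<forall>z. z \<notin> Plain ` set xs \<union> Diff ` set xs \<longrightarrow> \<phi> \<zeta> z = \<phi> 0 z) \<and>
        (T > 0 \<longrightarrow> (\<forall>i<length xs.
           ((\<lambda>t. \<phi> t (Plain (xs ! i))) has_real_derivative \<phi> \<zeta> (Diff (xs ! i)))
             (at \<zeta> within {0..T}))))"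

lemma ode_rel_iff_solution:
  "ode_rel I xs fs R \<omega> \<nu> \<longleftrightarrow> (\<exists>T \<phi>. ode_solution I xs fs R T \<phi> \<and>
      (\<forall>z. z \<notin> Diff ` set xs \<longrightarrow> \<phi> 0 z = \<omega> z) \<and> \<phi> T = \<nu>)"
  unfolding ode_rel_def ode_solution_def by blast

lemma ode_solutionI:
  assumes "T \<ge> 0"
    and "\<And>\<zeta> i. \<zeta> \<in> {0..T} \<Longrightarrow> i < length xs \<Longrightarrow> \<phi> \<zeta> (Diff (xs ! i)) = teval I (fs ! i) (\<phi> \<zeta>)"
    and "\<And>\<zeta>. \<zeta> \<in> {0..T} \<Longrightarrow> R (\<phi> \<zeta>)"
    and "\<And>\<zeta> z. \<zeta> \<in> {0..T} \<Longrightarrow> z \<notin> Plain ` set xs \<Longrightarrow> z \<notin> Diff ` set xs \<Longrightarrow> \<phi> \<zeta> z = \<phi> 0 z"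
    and "\<And>\<zeta> i. \<zeta> \<in> {0..T} \<Longrightarrow> T > 0 \<Longrightarrow> i < length xs \<Longrightarrow>
          ((\<lambda>t. \<phi> t (Plain (xs ! i))) has_real_derivative \<phi> \<zeta> (Diff (xs ! i))) (at \<zeta> within {0..T})"
  shows "ode_solution I xs fs R T \<phi>"
  unfolding ode_solution_def using assms by blast

lemma
  assumes "ode_solution I xs fs R T \<phi>"
  shows ode_solution_nonneg: "T \<ge> 0"
    and ode_solution_Diff: "\<And>\<zeta> i. \<zeta> \<in> {0..T} \<Longrightarrow> i < length xs \<Longrightarrow>
          \<phi> \<zeta> (Diff (xs ! i)) = teval I (fs ! i) (\<phi> \<zeta>)"
    and ode_solution_constraint: "\<And>\<zeta>. \<zeta> \<in> {0..T} \<Longrightarrow> R (\<phi> \<zeta>)"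
    and ode_solution_frame: "\<And>\<zeta> z. \<zeta> \<in> {0..T} \<Longrightarrow> z \<notin> Plain ` set xs \<Longrightarrow> z \<notin> Diff ` set xs \<Longrightarrow>
          \<phi> \<zeta> z = \<phi> 0 z"
    and ode_solution_deriv: "\<And>\<zeta> i. \<zeta> \<in> {0..T} \<Longrightarrow> T > 0 \<Longrightarrow> i < length xs \<Longrightarrow>
          ((\<lambda>t. \<phi> t (Plain (xs ! i))) has_real_derivative \<phi> \<zeta> (Diff (xs ! i))) (at \<zeta> within {0..T})"
  using assms unfolding ode_solution_def by blast+

lemma ode_solution_mono:
  "ode_solution I xs fs R T \<phi> \<Longrightarrow> (\<And>\<zeta>. \<zeta> \<in> {0..T} \<Longrightarrow> R (\<phi> \<zeta>) \<Longrightarrow> R' (\<phi> \<zeta>))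
   \<Longrightarrow> ode_solution I xs fs R' T \<phi>"
  unfolding ode_solution_def by blast

lemma ode_solution_prefix:
  assumes r: "ode_solution I xs fs R T \<phi>" and "0 \<le> T'" "T' \<le> T"
  shows "ode_solution I xs fs R T' \<phi>"
proof -
  have sub: "{0..T'} \<subseteq> {0..T}" using assms by auto
  show ?thesis
  proof (rule ode_solutionI)
    fix \<zeta> i assume "\<zeta> \<in> {0..T'}" "T' > 0" "i < length xs"
    then show "((\<lambda>t. \<phi> t (Plain (xs ! i))) has_real_derivative \<phi> \<zeta> (Diff (xs ! i)))
        (at \<zeta> within {0..T'})"
      using ode_solution_deriv[OF r] has_field_derivative_subset[OF _ sub] sub by auto
  qed (use assms sub ode_solution_Diff[OF r] ode_solution_constraint[OF r] ode_solution_frame[OF r]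
       in blast)+
qed

lemma ode_solution_restrict:
  assumes "ode_solution I xs fs R T \<phi>" and "0 \<le> T'" "T' \<le> T"
    and "\<And>\<zeta>. \<zeta> \<in> {0..T'} \<Longrightarrow> R' (\<phi> \<zeta>)"
  shows "ode_solution I xs fs R' T' \<phi>"
  using ode_solution_mono[OF ode_solution_prefix[OF assms(1-3)]] assms(4) by blast

lemma has_real_derivative_shift_within:
  assumes "(f has_real_derivative D) (at (x + c) within {a..b})"
  shows "((\<lambda>s. f (s + c)) has_real_derivative D) (at x within {a - c..b - c})"
proof -
  have "(\<lambda>s. s + c) ` {a - c..b - c} = {a..b}" by simp
  then have "(f \<circ> (\<lambda>s. s + c) has_real_derivative D * 1) (at x within {a - c..b - c})"
    using assms by (intro DERIV_image_chain) (auto intro!: derivative_eq_intros)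
  then show ?thesis by (simp add: o_def)
qed

lemma has_real_derivative_not_islimpt:
  fixes x :: real
  assumes "\<not> x islimpt S"
  shows "(f has_real_derivative D) (at x within S)"
  using assms by (simp add: has_field_derivative_iff trivial_limit_within[symmetric])

lemma has_real_derivative_within_Icc_join:
  fixes f :: "real \<Rightarrow> real"
  assumes "a \<le> b" "b \<le> c"
    and left: "a < b \<Longrightarrow> t \<in> {a..b} \<Longrightarrow> (f has_real_derivative D) (at t within {a..b})"
    and right: "b < c \<Longrightarrow> t \<in> {b..c} \<Longrightarrow> (f has_real_derivative D) (at t within {b..c})"
  shows "(f has_real_derivative D) (at t within {a..c})"
proof -
  have trivial: "(f has_real_derivative D) (at t within {p..q})"
    if "p = q \<or> t \<notin> {p..q}" for p q :: real
  proof (rule has_real_derivative_not_islimpt)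
    show "\<not> t islimpt {p..q}"
      using that
    proof (elim disjE)
      show "\<not> t islimpt {p..q}" if "p = q" using that by (simp add: islimpt_finite)
      show "\<not> t islimpt {p..q}" if "t \<notin> {p..q}"
        using that closed_limpt[of "{p..q}"] by blast
    qed
  qed
  have "(f has_real_derivative D) (at t within {a..b})"
    using left trivial \<open>a \<le> b\<close> by (cases "a < b \<and> t \<in> {a..b}") auto
  moreover have "(f has_real_derivative D) (at t within {b..c})"
    using right trivial \<open>b \<le> c\<close> by (cases "b < c \<and> t \<in> {b..c}") auto
  moreover have "{a..c} = {a..b} \<union> {b..c}" using assms(1,2) by auto
  ultimately show ?thesis unfolding has_field_derivative_iff by (simp add: Lim_within_Un)
qed

lemma has_real_derivative_nonzero_moves:
  fixes g :: "real \<Rightarrow> real"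
  assumes "(g has_real_derivative D) (at 0 within {0..T})" and "D \<noteq> 0" and "0 < T"
  shows "\<exists>h>0. h \<le> T \<and> (\<forall>s\<in>{0<..h}. g s \<noteq> g 0)"
proof -
  have "((\<lambda>y. (g y - g 0) / (y - 0)) \<longlongrightarrow> D) (at 0 within {0..T})"
    using assms(1) by (simp add: has_field_derivative_iff)
  then have "eventually (\<lambda>y. (g y - g 0) / (y - 0) \<noteq> 0) (at 0 within {0..T})"
    using assms(2) by (rule tendsto_imp_eventually_ne)
  then obtain d where d: "d > 0"
    "\<And>y. y \<in> {0..T} \<Longrightarrow> y \<noteq> 0 \<Longrightarrow> dist y 0 < d \<Longrightarrow> (g y - g 0) / (y - 0) \<noteq> 0"
    unfolding eventually_at by blast
  show ?thesis
  proof (intro exI[of _ "min (d/2) T"] conjI ballI)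
    fix s assume "s \<in> {0<..min (d/2) T}"
    then have "(g s - g 0) / (s - 0) \<noteq> 0" using d by (intro d(2)) auto
    then show "g s \<noteq> g 0" by auto
  qed (use d assms(3) in auto)
qed

lemma ode_solution_shift:
  assumes r: "ode_solution I xs fs R T \<phi>" and t0: "0 \<le> t0" "t0 \<le> T"
  shows "ode_solution I xs fs R (T - t0) (\<lambda>s. \<phi> (s + t0))"
proof (rule ode_solutionI)
  fix \<zeta> assume "\<zeta> \<in> {0..T - t0}"
  then have \<zeta>: "\<zeta> + t0 \<in> {0..T}" using t0 by auto
  have 0: "0 + t0 \<in> {0..T}" using t0 by auto
  show "\<phi> (\<zeta> + t0) z = \<phi> (0 + t0) z" if "z \<notin> Plain ` set xs" "z \<notin> Diff ` set xs" for z
    using ode_solution_frame[OF r \<zeta> that] ode_solution_frame[OF r 0 that] by simp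
  show "((\<lambda>t. \<phi> (t + t0) (Plain (xs ! i))) has_real_derivative \<phi> (\<zeta> + t0) (Diff (xs ! i)))
      (at \<zeta> within {0..T - t0})" if "T - t0 > 0" "i < length xs" for i
  proof -
    have "T > 0" using that(1) t0 by simp
    from has_real_derivative_shift_within[OF ode_solution_deriv[OF r \<zeta> this that(2)]]
    show ?thesis by (rule has_field_derivative_subset) (use t0 in auto)
  qed
  show "\<phi> (\<zeta> + t0) (Diff (xs ! i)) = teval I (fs ! i) (\<phi> (\<zeta> + t0))" if "i < length xs" for i
    using ode_solution_Diff[OF r \<zeta> that] .
  show "R (\<phi> (\<zeta> + t0))" using ode_solution_constraint[OF r \<zeta>] .
qed (use t0 in simp)

lemma ode_solution_append:
  assumes r1: "ode_solution I xs fs R T1 \<phi>" and r2: "ode_solution I xs fs R T2 \<psi>"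
    and join: "\<psi> 0 = \<phi> T1"
  shows "ode_solution I xs fs R (T1 + T2) (\<lambda>t. if t \<le> T1 then \<phi> t else \<psi> (t - T1))"
proof -
  define \<gamma> where "\<gamma> t = (if t \<le> T1 then \<phi> t else \<psi> (t - T1))" for t
  have T1: "T1 \<ge> 0" and T2: "T2 \<ge> 0" using ode_solution_nonneg r1 r2 by blast+
  have left: "\<gamma> t = \<phi> t" if "t \<in> {0..T1}" for t using that by (simp add: \<gamma>_def)
  have right: "\<gamma> t = \<psi> (t - T1)" if "t \<in> {T1..T1 + T2}" for t
    using that join by (cases "t = T1") (auto simp: \<gamma>_def)
  have on_pieces: "S (\<gamma> \<zeta>)"
    if "\<zeta> \<in> {0..T1 + T2}" "\<And>t. t \<in> {0..T1} \<Longrightarrow> S (\<phi> t)" "\<And>s. s \<in> {0..T2} \<Longrightarrow> S (\<psi> s)"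
    for S \<zeta>
  proof (cases "\<zeta> \<le> T1")
    case True
    then show ?thesis using that(1,2) left by auto
  next
    case False
    then show ?thesis using that(1,3) right[of \<zeta>] by auto
  qed
  have "ode_solution I xs fs R (T1 + T2) \<gamma>"
  proof (rule ode_solutionI)
    fix \<zeta> assume \<zeta>: "\<zeta> \<in> {0..T1 + T2}"
    show "R (\<gamma> \<zeta>)"
      by (rule on_pieces[OF \<zeta>]) (use ode_solution_constraint r1 r2 in blast)+
    show "\<gamma> \<zeta> (Diff (xs ! i)) = teval I (fs ! i) (\<gamma> \<zeta>)" if "i < length xs" for i
      by (rule on_pieces[OF \<zeta>, where S = "\<lambda>s. s (Diff (xs ! i)) = teval I (fs ! i) s"])
        (use ode_solution_Diff that r1 r2 in blast)+
    show "\<gamma> \<zeta> z = \<gamma> 0 z" if "z \<notin> Plain ` set xs" "z \<notin> Diff ` set xs" for z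
    proof (rule on_pieces[OF \<zeta>, where S = "\<lambda>s. s z = \<gamma> 0 z"])
      have "\<gamma> 0 = \<phi> 0" using left T1 by simp
      then show "\<phi> t z = \<gamma> 0 z" if "t \<in> {0..T1}" for t
        using ode_solution_frame[OF r1 that] \<open>z \<notin> Plain ` set xs\<close> \<open>z \<notin> Diff ` set xs\<close> by simp
      then show "\<psi> s z = \<gamma> 0 z" if "s \<in> {0..T2}" for s
        using ode_solution_frame[OF r2 that] \<open>z \<notin> Plain ` set xs\<close> \<open>z \<notin> Diff ` set xs\<close> join T1
        by simp
    qed
    show "((\<lambda>t. \<gamma> t (Plain (xs ! i))) has_real_derivative \<gamma> \<zeta> (Diff (xs ! i)))
        (at \<zeta> within {0..T1 + T2})" if "i < length xs" for i
    proof (rule has_real_derivative_within_Icc_join[OF T1])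
      show "T1 \<le> T1 + T2" using T2 by simp
      assume "0 < T1" and \<zeta>1: "\<zeta> \<in> {0..T1}"
      have "((\<lambda>t. \<phi> t (Plain (xs ! i))) has_real_derivative \<gamma> \<zeta> (Diff (xs ! i)))
          (at \<zeta> within {0..T1})"
        using ode_solution_deriv[OF r1 \<zeta>1 \<open>0 < T1\<close> that] left[OF \<zeta>1] by simp
      then show "((\<lambda>t. \<gamma> t (Plain (xs ! i))) has_real_derivative \<gamma> \<zeta> (Diff (xs ! i)))
          (at \<zeta> within {0..T1})"
        by (rule has_field_derivative_transform_within[OF _ zero_less_one \<zeta>1]) (simp add: left)
    next
      assume "T1 < T1 + T2" and \<zeta>2: "\<zeta> \<in> {T1..T1 + T2}"
      then have "((\<lambda>t. \<psi> t (Plain (xs ! i))) has_real_derivative \<psi> (\<zeta> - T1) (Diff (xs ! i)))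
          (at (\<zeta> + - T1) within {0..T2})"
        using ode_solution_deriv[OF r2 _ _ that, of "\<zeta> - T1"] by simp
      from has_real_derivative_shift_within[OF this]
      have "((\<lambda>t. \<psi> (t - T1) (Plain (xs ! i))) has_real_derivative \<gamma> \<zeta> (Diff (xs ! i)))
          (at \<zeta> within {T1..T1 + T2})"
        using right[OF \<zeta>2] by (simp add: add.commute)
      then show "((\<lambda>t. \<gamma> t (Plain (xs ! i))) has_real_derivative \<gamma> \<zeta> (Diff (xs ! i)))
          (at \<zeta> within {T1..T1 + T2})"
        by (rule has_field_derivative_transform_within[OF _ zero_less_one \<zeta>2]) (simp add: right)
    qed
  qed (use T1 T2 in simp)
  then show ?thesis unfolding \<gamma>_def[abs_def] .
qed

lemma ode_solution_start:
  assumes r: "ode_solution I xs fs R T \<psi>" and len: "length fs = length xs"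
    and df: "\<And>f. f \<in> set fs \<Longrightarrow> dfree f"
    and agree: "\<And>z. z \<notin> Diff ` set xs \<Longrightarrow> \<psi> 0 z = \<nu> z"
    and \<nu>: "\<And>i. i < length xs \<Longrightarrow> \<nu> (Diff (xs ! i)) = teval I (fs ! i) \<nu>"
  shows "\<psi> 0 = \<nu>"
proof
  fix z
  show "\<psi> 0 z = \<nu> z"
  proof (cases "z \<in> Diff ` set xs")
    case True
    then obtain i where i: "i < length xs" "z = Diff (xs ! i)" by (auto simp: in_set_conv_nth)
    have 0: "0 \<in> {0..T}" using ode_solution_nonneg[OF r] by simp
    have "\<psi> 0 z = teval I (fs ! i) (\<psi> 0)" using ode_solution_Diff[OF r 0 i(1)] i by simp
    also have "\<dots> = teval I (fs ! i) \<nu>"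
      by (rule teval_dfree_cong) (use df len i agree in auto)
    finally show ?thesis using \<nu> i by simp
  qed (use agree in auto)
qed

lemma ode_solution_override_on:
  assumes r: "ode_solution I xs fs R T \<phi>"
    and xs_W: "\<And>v. v \<in> set xs \<Longrightarrow> Plain v \<notin> W \<and> Diff v \<notin> W"
    and fs_W: "\<And>i. i < length xs \<Longrightarrow> tvars (fs ! i) \<inter> W = {}"
    and R: "\<And>\<zeta>. \<zeta> \<in> {0..T} \<Longrightarrow> R (\<phi> \<zeta>) \<Longrightarrow> R' (override_on (\<phi> \<zeta>) c W)"
  shows "ode_solution I xs fs R' T (\<lambda>t. override_on (\<phi> t) c W)"
proof (rule ode_solutionI)
  fix \<zeta> assume \<zeta>: "\<zeta> \<in> {0..T}"
  show "override_on (\<phi> \<zeta>) c W (Diff (xs ! i)) = teval I (fs ! i) (override_on (\<phi> \<zeta>) c W)"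
    if i: "i < length xs" for i
  proof -
    have "teval I (fs ! i) (override_on (\<phi> \<zeta>) c W) = teval I (fs ! i) (\<phi> \<zeta>)"
      by (rule teval_cong) (use fs_W[OF i] in \<open>auto simp: override_on_def\<close>)
    then show ?thesis using ode_solution_Diff[OF r \<zeta> i] xs_W[of "xs ! i"] i by simp
  qed
  show "((\<lambda>t. override_on (\<phi> t) c W (Plain (xs ! i))) has_real_derivative
      override_on (\<phi> \<zeta>) c W (Diff (xs ! i))) (at \<zeta> within {0..T})"
    if "T > 0" "i < length xs" for i
    using ode_solution_deriv[OF r \<zeta> that] xs_W[of "xs ! i"] that(2) by simp
  show "R' (override_on (\<phi> \<zeta>) c W)" using R[OF \<zeta> ode_solution_constraint[OF r \<zeta>]] .
  show "override_on (\<phi> \<zeta>) c W z = override_on (\<phi> 0) c W z"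
    if "z \<notin> Plain ` set xs" "z \<notin> Diff ` set xs" for z
    using ode_solution_frame[OF r \<zeta> that] by (simp add: override_on_def)
qed (rule ode_solution_nonneg[OF r])

section \<open>Local Lipschitz continuity of smooth terms\<close>

lemma lcont_eps_delta:
  assumes lc: "lcont k h c" and e: "e > 0"
  shows "\<exists>\<delta>>0. \<forall>z. length z = k \<longrightarrow> (\<forall>j<k. \<bar>z!j - c!j\<bar> \<le> \<delta>) \<longrightarrow> \<bar>h z - h c\<bar> < e"
proof (rule ccontr)
  assume "\<not> ?thesis"
  then have "\<forall>m::nat. \<exists>z. length z = k \<and> (\<forall>j<k. \<bar>z!j - c!j\<bar> \<le> 1 / (real m + 1)) \<and>
      \<not> \<bar>h z - h c\<bar> < e"
    by (metis of_nat_0_le_iff add_nonneg_pos zero_less_one zero_less_divide_1_iff)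
  then obtain X where X: "\<And>m. length (X m) = k"
    "\<And>m j. j < k \<Longrightarrow> \<bar>X m!j - c!j\<bar> \<le> 1 / (real m + 1)" "\<And>m. \<not> \<bar>h (X m) - h c\<bar> < e"
    by metis
  have "(\<lambda>m. X m ! j) \<longlonglongrightarrow> c ! j" if j: "j < k" for j
  proof (rule LIMSEQ_I)
    fix r :: real assume r: "0 < r"
    obtain N :: nat where N: "1 / r < N" using reals_Archimedean2 by blast
    show "\<exists>no. \<forall>n\<ge>no. norm (X n ! j - c ! j) < r"
    proof (intro exI allI impI)
      fix n assume "N \<le> n"
      then have "1 / r < real n + 1" using N by linarith
      then have "1 / (real n + 1) < r" using r by (simp add: field_simps)
      then show "norm (X n ! j - c ! j) < r" using X(2)[OF j, of n] by simp
    qed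
  qed
  then have "(\<lambda>m. h (X m)) \<longlonglongrightarrow> h c" using lc X(1) unfolding lcont_def by blast
  from LIMSEQ_D[OF this e] obtain no where "\<forall>n\<ge>no. norm (h (X n) - h c) < e" by blast
  then show False using X(3)[of no] by simp
qed

lemma smooth_fn_has_partial_derivative:
  assumes sm: "smooth_fn k g" and z: "length z = k" and j: "j < k"
  shows "((\<lambda>s. g (z[j := s])) has_real_derivative partial_l j g (z[j := t])) (at t)"
proof -
  let ?z = "z[j := t]"
  have "(\<lambda>s. g (?z[j := s])) differentiable (at (?z ! j))"
    using sm z j unfolding smooth_fn_def by (metis empty_subsetI empty_set length_list_update partials_l.simps(1))
  then obtain D where D: "((\<lambda>s. g (z[j := s])) has_real_derivative D) (at t)"
    using z j by (auto simp: DERIV_deriv_iff_real_differentiable[symmetric])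
  have "partial_l j g (z[j := t]) = D"
    unfolding partial_l_def using D z j by (auto intro!: the_equality dest: DERIV_unique)
  then show ?thesis using D by simp
qed

text \<open>Moving from a to b one coordinate at a time, each step is controlled by the
  mean value theorem.\<close>
lemma lipschitz_of_partials_bounded:
  fixes g :: "real list \<Rightarrow> real"
  assumes deriv: "\<And>j z t. j < k \<Longrightarrow> length z = k \<Longrightarrow>
      ((\<lambda>s. g (z[j := s])) has_real_derivative g' j (z[j := t])) (at t)"
    and bound: "\<And>j z. j < k \<Longrightarrow> length z = k \<Longrightarrow> \<forall>i<k. \<bar>z!i - c!i\<bar> \<le> \<delta> \<Longrightarrow> \<bar>g' j z\<bar> \<le> L"
    and a: "length a = k" "\<forall>j<k. \<bar>a!j - c!j\<bar> \<le> \<delta>"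
    and b: "length b = k" "\<forall>j<k. \<bar>b!j - c!j\<bar> \<le> \<delta>"
  shows "\<bar>g a - g b\<bar> \<le> L * (\<Sum>j<k. \<bar>a!j - b!j\<bar>)"
proof -
  define C where "C m = map (\<lambda>p. if p < m then b!p else a!p) [0..<k]" for m
  have lC: "length (C m) = k" for m unfolding C_def by simp
  have Cn: "C m ! p = (if p < m then b!p else a!p)" if "p < k" for m p
    unfolding C_def using that by simp
  have C0: "C 0 = a" by (rule nth_equalityI) (use lC a Cn in auto)
  have Ck: "C k = b" by (rule nth_equalityI) (use lC b Cn in auto)
  have step: "\<bar>g (C (Suc m)) - g (C m)\<bar> \<le> L * \<bar>a!m - b!m\<bar>" if m: "m < k" for m
  proof -
    let ?S = "closed_segment (a!m) (b!m)"
    have "norm (g ((C m)[m := b!m]) - g ((C m)[m := a!m])) \<le> L * norm (b!m - a!m)"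
    proof (rule field_differentiable_bound[where S = ?S and f' = "\<lambda>s. g' m ((C m)[m := s])"])
      show "((\<lambda>s. g ((C m)[m := s])) has_field_derivative g' m ((C m)[m := s])) (at s within ?S)" for s
        using deriv[OF m lC] by (rule has_field_derivative_at_within)
      show "norm (g' m ((C m)[m := s])) \<le> L" if s: "s \<in> ?S" for s
      proof -
        have "\<bar>s - c!m\<bar> \<le> \<delta>"
          using s a(2)[rule_format, OF m] b(2)[rule_format, OF m]
          by (auto simp: closed_segment_eq_real_ivl abs_le_iff split: if_splits)
        then have "\<forall>i<k. \<bar>(C m)[m := s] ! i - c!i\<bar> \<le> \<delta>"
        proof (intro allI impI)
          fix i assume i: "i < k"
          show "\<bar>(C m)[m := s] ! i - c!i\<bar> \<le> \<delta>" if "\<bar>s - c!m\<bar> \<le> \<delta>"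
            using that a(2) b(2) i lC[of m] Cn[OF i, of m] by (cases "i = m") auto
        qed
        then show ?thesis using bound[OF m] lC[of m] by simp
      qed
    qed auto
    moreover have "(C m)[m := b!m] = C (Suc m)"
    proof (rule nth_equalityI)
      fix i assume "i < length ((C m)[m := b!m])"
      then show "(C m)[m := b!m] ! i = C (Suc m) ! i"
        using lC[of m] Cn[of i m] Cn[of i "Suc m"] by (cases "i = m") auto
    qed (simp add: lC)
    moreover have "(C m)[m := a!m] = C m"
      using Cn[OF m, of m] list_update_id[of "C m" m] by simp
    ultimately show ?thesis by (simp add: abs_minus_commute)
  qed
  have "\<bar>g a - g b\<bar> = \<bar>\<Sum>m<k. g (C (Suc m)) - g (C m)\<bar>"
    using sum_lessThan_telescope[of "\<lambda>m. g (C m)" k] C0 Ck by (simp add: abs_minus_commute)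
  also have "\<dots> \<le> (\<Sum>m<k. \<bar>g (C (Suc m)) - g (C m)\<bar>)" by (rule sum_abs)
  also have "\<dots> \<le> (\<Sum>m<k. L * \<bar>a!m - b!m\<bar>)" by (rule sum_mono) (use step in auto)
  finally show ?thesis by (simp add: sum_distrib_left)
qed

lemma smooth_fn_locally_lipschitz:
  assumes sm: "smooth_fn k g" and c: "length c = k"
  shows "\<exists>\<delta>>0. \<exists>L\<ge>0. \<forall>a b. length a = k \<longrightarrow> length b = k \<longrightarrow>
     (\<forall>j<k. \<bar>a!j - c!j\<bar> \<le> \<delta>) \<longrightarrow> (\<forall>j<k. \<bar>b!j - c!j\<bar> \<le> \<delta>) \<longrightarrow>
     \<bar>g a - g b\<bar> \<le> L * (\<Sum>j<k. \<bar>a!j - b!j\<bar>)"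
proof -
  have "lcont k (partial_l i g) c" if "i < k" for i
    using sm c that unfolding smooth_fn_def
    by (metis empty_subsetI empty_set insert_subset lessThan_iff list.simps(15) partials_l.simps)
  then have "\<forall>i. \<exists>\<delta>. i < k \<longrightarrow> \<delta> > 0 \<and> (\<forall>z. length z = k \<longrightarrow> (\<forall>j<k. \<bar>z!j - c!j\<bar> \<le> \<delta>) \<longrightarrow>
      \<bar>partial_l i g z - partial_l i g c\<bar> < 1)"
    using lcont_eps_delta[of k _ c 1] by auto
  then obtain D where D: "\<And>i. i < k \<Longrightarrow> D i > 0"
    "\<And>i z. i < k \<Longrightarrow> length z = k \<Longrightarrow> (\<forall>j<k. \<bar>z!j - c!j\<bar> \<le> D i) \<Longrightarrow>
      \<bar>partial_l i g z - partial_l i g c\<bar> < 1"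
    by metis
  define \<delta> where "\<delta> = Min (insert 1 (D ` {..<k}))"
  define L where "L = (\<Sum>i<k. \<bar>partial_l i g c\<bar> + 1)"
  have "\<delta> > 0" unfolding \<delta>_def using D(1) by (subst Min_gr_iff) auto
  moreover have "L \<ge> 0" unfolding L_def by (intro sum_nonneg) auto
  moreover have "\<bar>partial_l i g z\<bar> \<le> L"
    if "i < k" "length z = k" "\<forall>j<k. \<bar>z!j - c!j\<bar> \<le> \<delta>" for i z
  proof -
    have "\<delta> \<le> D i" unfolding \<delta>_def using that(1) by (intro Min_le) auto
    then have "\<bar>partial_l i g z - partial_l i g c\<bar> < 1" using D(2) that by force
    moreover have "\<bar>partial_l i g c\<bar> + 1 \<le> L"
      unfolding L_def using that(1) by (intro member_le_sum) auto
    ultimately show ?thesis by linarith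
  qed
  ultimately show ?thesis
    using lipschitz_of_partials_bounded[OF smooth_fn_has_partial_derivative[OF sm]] by blast
qed

text \<open>Along a solution only the variables xs move, so local Lipschitz continuity is measured
  in these coordinates, on boxes that keep all other plain variables fixed.\<close>
definition in_xbox :: "'v list \<Rightarrow> real \<Rightarrow> 'v state \<Rightarrow> 'v state \<Rightarrow> bool" where
  "in_xbox xs \<delta> \<omega>0 a \<longleftrightarrow> (\<forall>i<length xs. \<bar>a (Plain (xs!i)) - \<omega>0 (Plain (xs!i))\<bar> \<le> \<delta>) \<and>
     (\<forall>v. v \<notin> set xs \<longrightarrow> a (Plain v) = \<omega>0 (Plain v))"

definition xdist :: "'v list \<Rightarrow> 'v state \<Rightarrow> 'v state \<Rightarrow> real" where
  "xdist xs a b = (\<Sum>i<length xs. \<bar>a (Plain (xs!i)) - b (Plain (xs!i))\<bar>)"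

definition xlipschitz_at :: "'v list \<Rightarrow> 'v state \<Rightarrow> ('v state \<Rightarrow> real) \<Rightarrow> bool" where
  "xlipschitz_at xs \<omega>0 h \<longleftrightarrow> (\<exists>\<delta>>0. \<exists>L\<ge>0. \<forall>a b. in_xbox xs \<delta> \<omega>0 a \<longrightarrow> in_xbox xs \<delta> \<omega>0 b \<longrightarrow>
     \<bar>h a - h b\<bar> \<le> L * xdist xs a b)"

lemma xdist_nonneg: "xdist xs a b \<ge> 0"
  unfolding xdist_def by (intro sum_nonneg) auto

lemma in_xbox_mono: "in_xbox xs \<delta>' \<omega>0 a \<Longrightarrow> \<delta>' \<le> \<delta> \<Longrightarrow> in_xbox xs \<delta> \<omega>0 a"
  unfolding in_xbox_def by force

lemma in_xbox_center: "\<delta> \<ge> 0 \<Longrightarrow> in_xbox xs \<delta> \<omega>0 \<omega>0"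
  unfolding in_xbox_def by simp

lemma xdist_le_in_xbox:
  assumes "in_xbox xs \<delta> \<omega>0 a" "in_xbox xs \<delta> \<omega>0 b"
  shows "xdist xs a b \<le> real (length xs) * (2 * \<delta>)"
proof -
  have "xdist xs a b \<le> (\<Sum>i<length xs. 2 * \<delta>)" unfolding xdist_def
  proof (rule sum_mono)
    fix i assume "i \<in> {..<length xs}"
    then have "i < length xs" by simp
    then have "\<bar>a (Plain (xs!i)) - \<omega>0 (Plain (xs!i))\<bar> \<le> \<delta>" "\<bar>b (Plain (xs!i)) - \<omega>0 (Plain (xs!i))\<bar> \<le> \<delta>"
      using assms unfolding in_xbox_def by blast+
    then show "\<bar>a (Plain (xs!i)) - b (Plain (xs!i))\<bar> \<le> 2 * \<delta>" by linarith
  qed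
  then show ?thesis by simp
qed

lemma xlipschitz_at_uniform:
  assumes "\<And>h. h \<in> set hs \<Longrightarrow> xlipschitz_at xs \<omega>0 h"
  shows "\<exists>\<delta>>0. \<exists>L\<ge>0. \<forall>a b. in_xbox xs \<delta> \<omega>0 a \<longrightarrow> in_xbox xs \<delta> \<omega>0 b \<longrightarrow>
           (\<forall>h\<in>set hs. \<bar>h a - h b\<bar> \<le> L * xdist xs a b)"
  using assms
proof (induction hs)
  case Nil
  show ?case by (intro exI[where x = "1::real"] conjI) simp_all
next
  case (Cons h0 hs)
  then obtain d1 L1 where 1: "d1 > 0" "L1 \<ge> 0" "\<forall>a b. in_xbox xs d1 \<omega>0 a \<longrightarrow> in_xbox xs d1 \<omega>0 b \<longrightarrow>
      (\<forall>h\<in>set hs. \<bar>h a - h b\<bar> \<le> L1 * xdist xs a b)"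
    by auto
  obtain d2 L2 where 2: "d2 > 0" "L2 \<ge> 0" "\<forall>a b. in_xbox xs d2 \<omega>0 a \<longrightarrow> in_xbox xs d2 \<omega>0 b \<longrightarrow>
      \<bar>h0 a - h0 b\<bar> \<le> L2 * xdist xs a b"
    using Cons.prems[of h0] unfolding xlipschitz_at_def by auto
  have main: "\<forall>h\<in>set (h0 # hs). \<bar>h a - h b\<bar> \<le> max L1 L2 * xdist xs a b"
    if "in_xbox xs (min d1 d2) \<omega>0 a" "in_xbox xs (min d1 d2) \<omega>0 b" for a b
  proof -
    have "in_xbox xs d1 \<omega>0 a" "in_xbox xs d2 \<omega>0 a" "in_xbox xs d1 \<omega>0 b" "in_xbox xs d2 \<omega>0 b"
      using that in_xbox_mono by (metis min.cobounded1 min.cobounded2)+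
    moreover have "L1 * xdist xs a b \<le> max L1 L2 * xdist xs a b" "L2 * xdist xs a b \<le> max L1 L2 * xdist xs a b"
      by (simp_all add: mult_right_mono xdist_nonneg)
    ultimately show ?thesis using 1(3) 2(3) by force
  qed
  show ?case
    by (rule exI[of _ "min d1 d2"], intro conjI exI[of _ "max L1 L2"] allI impI)
      (use 1(1,2) 2(1,2) main in auto)
qed

lemma xlipschitz_at_bounded:
  assumes "\<forall>a b. in_xbox xs \<delta> \<omega>0 a \<longrightarrow> in_xbox xs \<delta> \<omega>0 b \<longrightarrow> \<bar>h a - h b\<bar> \<le> L * xdist xs a b"
    and "\<delta> \<ge> 0" "L \<ge> 0" "in_xbox xs \<delta> \<omega>0 a"
  shows "\<bar>h a\<bar> \<le> \<bar>h \<omega>0\<bar> + L * (real (length xs) * (2 * \<delta>))"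
proof -
  have "\<bar>h a - h \<omega>0\<bar> \<le> L * xdist xs a \<omega>0" using assms in_xbox_center by blast
  also have "\<dots> \<le> L * (real (length xs) * (2 * \<delta>))"
    using assms(2-4) in_xbox_center xdist_le_in_xbox by (metis mult_left_mono)
  finally show ?thesis by linarith
qed

lemma xlipschitz_atI:
  "\<delta> > 0 \<Longrightarrow> L \<ge> 0 \<Longrightarrow>
   (\<And>a b. in_xbox xs \<delta> \<omega>0 a \<Longrightarrow> in_xbox xs \<delta> \<omega>0 b \<Longrightarrow> \<bar>h a - h b\<bar> \<le> L * xdist xs a b) \<Longrightarrow>
   xlipschitz_at xs \<omega>0 h"
  unfolding xlipschitz_at_def by blast

lemma xlipschitz_at_const: "xlipschitz_at xs \<omega>0 (\<lambda>s. c)"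
  by (rule xlipschitz_atI[where \<delta> = 1 and L = 0]) (simp_all add: xdist_nonneg)

lemma xlipschitz_at_Plain: "xlipschitz_at xs \<omega>0 (\<lambda>s. s (Plain v))"
proof (rule xlipschitz_atI[where \<delta> = 1 and L = 1])
  fix a b assume a: "in_xbox xs 1 \<omega>0 a" and b: "in_xbox xs 1 \<omega>0 b"
  show "\<bar>a (Plain v) - b (Plain v)\<bar> \<le> 1 * xdist xs a b"
  proof (cases "v \<in> set xs")
    case True
    then obtain i where i: "i < length xs" "v = xs ! i" by (auto simp: in_set_conv_nth)
    have "\<bar>a (Plain (xs!i)) - b (Plain (xs!i))\<bar> \<le> (\<Sum>j<length xs. \<bar>a (Plain (xs!j)) - b (Plain (xs!j))\<bar>)"
      by (rule member_le_sum) (use i in auto)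
    then show ?thesis unfolding xdist_def using i by simp
  next
    case False
    then show ?thesis using a b by (simp add: in_xbox_def xdist_nonneg)
  qed
qed simp_all

lemma xlipschitz_at_pair:
  assumes "xlipschitz_at xs \<omega>0 f" "xlipschitz_at xs \<omega>0 g"
  obtains \<delta> L where "\<delta> > 0" "L \<ge> 0"
    "\<And>a b. in_xbox xs \<delta> \<omega>0 a \<Longrightarrow> in_xbox xs \<delta> \<omega>0 b \<Longrightarrow> \<bar>f a - f b\<bar> \<le> L * xdist xs a b"
    "\<And>a b. in_xbox xs \<delta> \<omega>0 a \<Longrightarrow> in_xbox xs \<delta> \<omega>0 b \<Longrightarrow> \<bar>g a - g b\<bar> \<le> L * xdist xs a b"
proof -
  have "\<And>h. h \<in> set [f, g] \<Longrightarrow> xlipschitz_at xs \<omega>0 h" using assms by auto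
  from xlipschitz_at_uniform[OF this] obtain \<delta> L where "\<delta> > 0" "L \<ge> 0"
    "\<forall>a b. in_xbox xs \<delta> \<omega>0 a \<longrightarrow> in_xbox xs \<delta> \<omega>0 b \<longrightarrow>
       (\<forall>h\<in>set [f, g]. \<bar>h a - h b\<bar> \<le> L * xdist xs a b)"
    by blast
  then show thesis by (intro that[of \<delta> L]) auto
qed

lemma xlipschitz_at_add:
  assumes "xlipschitz_at xs \<omega>0 f" "xlipschitz_at xs \<omega>0 g"
  shows "xlipschitz_at xs \<omega>0 (\<lambda>s. f s + g s)"
proof -
  obtain \<delta> L where "\<delta> > 0" "L \<ge> 0"
    and f: "\<And>a b. in_xbox xs \<delta> \<omega>0 a \<Longrightarrow> in_xbox xs \<delta> \<omega>0 b \<Longrightarrow> \<bar>f a - f b\<bar> \<le> L * xdist xs a b"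
    and g: "\<And>a b. in_xbox xs \<delta> \<omega>0 a \<Longrightarrow> in_xbox xs \<delta> \<omega>0 b \<Longrightarrow> \<bar>g a - g b\<bar> \<le> L * xdist xs a b"
    using xlipschitz_at_pair[OF assms] by blast
  show ?thesis
  proof (rule xlipschitz_atI[where \<delta> = \<delta> and L = "2 * L"])
    fix a b assume a: "in_xbox xs \<delta> \<omega>0 a" and b: "in_xbox xs \<delta> \<omega>0 b"
    have "2 * L * xdist xs a b = L * xdist xs a b + L * xdist xs a b" by simp
    then show "\<bar>f a + g a - (f b + g b)\<bar> \<le> 2 * L * xdist xs a b"
      using f[OF a b] g[OF a b] by arith
  qed (use \<open>\<delta> > 0\<close> \<open>L \<ge> 0\<close> in auto)
qed

lemma xlipschitz_at_mult:
  assumes "xlipschitz_at xs \<omega>0 f" "xlipschitz_at xs \<omega>0 g"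
  shows "xlipschitz_at xs \<omega>0 (\<lambda>s. f s * g s)"
proof -
  obtain \<delta> L where \<delta>: "\<delta> > 0" and L: "L \<ge> 0"
    and f: "\<forall>a b. in_xbox xs \<delta> \<omega>0 a \<longrightarrow> in_xbox xs \<delta> \<omega>0 b \<longrightarrow> \<bar>f a - f b\<bar> \<le> L * xdist xs a b"
    and g: "\<forall>a b. in_xbox xs \<delta> \<omega>0 a \<longrightarrow> in_xbox xs \<delta> \<omega>0 b \<longrightarrow> \<bar>g a - g b\<bar> \<le> L * xdist xs a b"
    using xlipschitz_at_pair[OF assms] by metis
  define r where "r = L * (real (length xs) * (2 * \<delta>))"
  define B where "B = \<bar>f \<omega>0\<bar> + \<bar>g \<omega>0\<bar> + r"
  have "r \<ge> 0" unfolding r_def using \<delta> L by simp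
  then have B: "B \<ge> 0" "\<bar>f \<omega>0\<bar> + r \<le> B" "\<bar>g \<omega>0\<bar> + r \<le> B" unfolding B_def by auto
  show ?thesis
  proof (rule xlipschitz_atI[where \<delta> = \<delta> and L = "2 * B * L"])
    fix a b assume a: "in_xbox xs \<delta> \<omega>0 a" and b: "in_xbox xs \<delta> \<omega>0 b"
    have fa: "\<bar>f a\<bar> \<le> B"
      using xlipschitz_at_bounded[OF f less_imp_le[OF \<delta>] L a] B(2) unfolding r_def by linarith
    have gb: "\<bar>g b\<bar> \<le> B"
      using xlipschitz_at_bounded[OF g less_imp_le[OF \<delta>] L b] B(3) unfolding r_def by linarith
    have fd: "\<bar>f a - f b\<bar> \<le> L * xdist xs a b" and gd: "\<bar>g a - g b\<bar> \<le> L * xdist xs a b"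
      using f g a b by blast+
    have "\<bar>f a * g a - f b * g b\<bar> = \<bar>f a * (g a - g b) + g b * (f a - f b)\<bar>"
      by (simp add: algebra_simps)
    also have "\<dots> \<le> \<bar>f a\<bar> * \<bar>g a - g b\<bar> + \<bar>g b\<bar> * \<bar>f a - f b\<bar>"
      by (metis abs_mult abs_triangle_ineq)
    also have "\<dots> \<le> B * (L * xdist xs a b) + B * (L * xdist xs a b)"
      using fd gd fa gb B(1) by (intro add_mono mult_mono) auto
    finally show "\<bar>f a * g a - f b * g b\<bar> \<le> 2 * B * L * xdist xs a b"
      by (simp add: algebra_simps)
  qed (use \<delta> L B in auto)
qed

text \<open>For \<delta> small enough, the arguments stay inside a box around their values at \<omega>0 on which
  g is Lipschitz.\<close>
lemma xlipschitz_at_smooth_fn: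
  assumes sm: "smooth_fn k g" and len: "length as = k"
    and args: "\<And>a. a \<in> set as \<Longrightarrow> xlipschitz_at xs \<omega>0 a"
  shows "xlipschitz_at xs \<omega>0 (\<lambda>s. g (map (\<lambda>a. a s) as))"
proof -
  obtain \<delta>1 L1 where \<delta>1: "\<delta>1 > 0" and L1: "L1 \<ge> 0"
    and lip1: "\<forall>a b. in_xbox xs \<delta>1 \<omega>0 a \<longrightarrow> in_xbox xs \<delta>1 \<omega>0 b \<longrightarrow>
      (\<forall>h\<in>set as. \<bar>h a - h b\<bar> \<le> L1 * xdist xs a b)"
    using xlipschitz_at_uniform[OF args] by blast
  define c where "c = map (\<lambda>a. a \<omega>0) as"
  have "length c = k" unfolding c_def using len by simp
  from smooth_fn_locally_lipschitz[OF sm this] obtain \<delta>g Lg where \<delta>g: "\<delta>g > 0" and Lg: "Lg \<ge> 0"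
    and lipg: "\<forall>a b. length a = k \<longrightarrow> length b = k \<longrightarrow>
      (\<forall>j<k. \<bar>a!j - c!j\<bar> \<le> \<delta>g) \<longrightarrow> (\<forall>j<k. \<bar>b!j - c!j\<bar> \<le> \<delta>g) \<longrightarrow>
      \<bar>g a - g b\<bar> \<le> Lg * (\<Sum>j<k. \<bar>a!j - b!j\<bar>)"
    by blast
  define n where "n = real (length xs)"
  define \<delta> where "\<delta> = min \<delta>1 (\<delta>g / ((L1 + 1) * (2 * n + 1)))"
  have n: "n \<ge> 0" unfolding n_def by simp
  have \<delta>: "\<delta> > 0" "\<delta> \<le> \<delta>1" unfolding \<delta>_def using \<delta>1 \<delta>g L1 n by simp_all
  have pos: "(L1 + 1) * (2 * n + 1) > 0" using L1 n by simp
  have "L1 * (n * (2 * \<delta>)) \<le> \<delta> * ((L1 + 1) * (2 * n + 1))"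
    using mult_nonneg_nonneg[OF L1 less_imp_le[OF \<delta>(1)]] mult_nonneg_nonneg[OF n less_imp_le[OF \<delta>(1)]] \<delta>(1)
    by (simp add: algebra_simps)
  also have "\<dots> \<le> \<delta>g"
    using pos_le_divide_eq[OF pos, of \<delta> \<delta>g] unfolding \<delta>_def by simp
  finally have small: "L1 * (n * (2 * \<delta>)) \<le> \<delta>g" .
  have near: "in_xbox xs \<delta>1 \<omega>0 s" if "in_xbox xs \<delta> \<omega>0 s" for s
    using in_xbox_mono[OF that \<delta>(2)] .
  have box: "\<forall>j<k. \<bar>map (\<lambda>a. a s) as ! j - c!j\<bar> \<le> \<delta>g" if s: "in_xbox xs \<delta> \<omega>0 s" for s
  proof (intro allI impI)
    fix j assume j: "j < k"
    have "as!j \<in> set as" using j len by simp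
    then have "\<bar>(as!j) s - (as!j) \<omega>0\<bar> \<le> L1 * xdist xs s \<omega>0"
      using lip1 near[OF s] in_xbox_center[of \<delta>1 xs \<omega>0] \<delta>1 by auto
    also have "\<dots> \<le> L1 * (n * (2 * \<delta>))"
      unfolding n_def using xdist_le_in_xbox[OF s in_xbox_center] \<delta> L1 by (simp add: mult_left_mono)
    finally show "\<bar>map (\<lambda>a. a s) as ! j - c!j\<bar> \<le> \<delta>g" unfolding c_def using j len small by simp
  qed
  show ?thesis
  proof (rule xlipschitz_atI[where \<delta> = \<delta> and L = "Lg * (real k * L1)"])
    fix a b assume a: "in_xbox xs \<delta> \<omega>0 a" and b: "in_xbox xs \<delta> \<omega>0 b"
    have "\<bar>g (map (\<lambda>h. h a) as) - g (map (\<lambda>h. h b) as)\<bar>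
        \<le> Lg * (\<Sum>j<k. \<bar>map (\<lambda>h. h a) as ! j - map (\<lambda>h. h b) as ! j\<bar>)"
      using lipg[rule_format, of "map (\<lambda>h. h a) as" "map (\<lambda>h. h b) as"] box[OF a] box[OF b] len
      by simp
    also have "\<dots> \<le> Lg * (\<Sum>j<k. L1 * xdist xs a b)"
      using lip1 near[OF a] near[OF b] len by (intro mult_left_mono[OF sum_mono Lg]) auto
    finally show "\<bar>g (map (\<lambda>h. h a) as) - g (map (\<lambda>h. h b) as)\<bar> \<le> Lg * (real k * L1) * xdist xs a b"
      by simp
  qed (use \<delta> Lg L1 in auto)
qed

lemma teval_xlipschitz_at:
  assumes sm: "\<And>g. smooth_fn (ar g) (I g)"
  shows "dfree t \<Longrightarrow> twf ar t \<Longrightarrow> xlipschitz_at xs \<omega>0 (teval I t)"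
proof (induction t)
  case (Var v)
  have "teval I (Var v) = (\<lambda>s. s (Plain v))" by (rule ext) simp
  then show ?case using xlipschitz_at_Plain by simp
next
  case (Const c)
  have "teval I (Const c) = (\<lambda>s. of_rat c)" by (rule ext) simp
  then show ?case using xlipschitz_at_const by simp
next
  case (Plus a b)
  have "teval I (Plus a b) = (\<lambda>s. teval I a s + teval I b s)" by (rule ext) simp
  then show ?case using xlipschitz_at_add[of xs \<omega>0 "teval I a" "teval I b"] Plus by simp
next
  case (Times a b)
  have "teval I (Times a b) = (\<lambda>s. teval I a s * teval I b s)" by (rule ext) simp
  then show ?case using xlipschitz_at_mult[of xs \<omega>0 "teval I a" "teval I b"] Times by simp
next
  case (Fn g as)
  have "teval I (Fn g as) = (\<lambda>s. I g (map (\<lambda>h. h s) (map (teval I) as)))"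
    by (rule ext) (simp add: comp_def)
  moreover have "xlipschitz_at xs \<omega>0 (\<lambda>s. I g (map (\<lambda>h. h s) (map (teval I) as)))"
    using Fn by (intro xlipschitz_at_smooth_fn[OF sm]) auto
  ultimately show ?case by simp
qed simp

section \<open>Local uniqueness of solutions\<close>

lemma ode_solution_in_xbox_near_start:
  assumes r: "ode_solution I xs fs R T u" and T: "T > 0" and \<delta>: "\<delta> > 0"
    and start: "\<And>w. u 0 (Plain w) = \<omega>0 (Plain w)"
  shows "\<exists>d>0. \<forall>t\<in>{0..T}. t < d \<longrightarrow> in_xbox xs \<delta> \<omega>0 (u t)"
proof -
  have 0: "(0::real) \<in> {0..T}" using T by simp
  have "eventually (\<lambda>t. \<bar>u t (Plain (xs!i)) - \<omega>0 (Plain (xs!i))\<bar> < \<delta>) (at 0 within {0..T})"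
    if i: "i < length xs" for i
  proof -
    have "((\<lambda>t. u t (Plain (xs!i))) \<longlongrightarrow> \<omega>0 (Plain (xs!i))) (at 0 within {0..T})"
      using DERIV_continuous[OF ode_solution_deriv[OF r 0 T i]] start
      unfolding continuous_within by simp
    then show ?thesis using \<delta> unfolding tendsto_iff dist_real_def by blast
  qed
  then have "eventually (\<lambda>t. \<forall>i\<in>{..<length xs}. \<bar>u t (Plain (xs!i)) - \<omega>0 (Plain (xs!i))\<bar> < \<delta>)
      (at 0 within {0..T})"
    by (intro eventually_ball_finite) auto
  then obtain d where d: "d > 0" "\<And>t. t \<in> {0..T} \<Longrightarrow> t \<noteq> 0 \<Longrightarrow> dist t 0 < d \<Longrightarrow>
      \<forall>i\<in>{..<length xs}. \<bar>u t (Plain (xs!i)) - \<omega>0 (Plain (xs!i))\<bar> < \<delta>"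
    unfolding eventually_at by blast
  have "in_xbox xs \<delta> \<omega>0 (u t)" if t: "t \<in> {0..T}" "t < d" for t
    unfolding in_xbox_def
  proof (intro conjI allI impI)
    fix i assume i: "i < length xs"
    show "\<bar>u t (Plain (xs!i)) - \<omega>0 (Plain (xs!i))\<bar> \<le> \<delta>"
    proof (cases "t = 0")
      case True
      then show ?thesis using start \<delta> by simp
    next
      case False
      then have "\<forall>i\<in>{..<length xs}. \<bar>u t (Plain (xs!i)) - \<omega>0 (Plain (xs!i))\<bar> < \<delta>"
        using d(2)[OF t(1)] t by (simp add: dist_real_def)
      then show ?thesis using i by (meson lessThan_iff less_imp_le)
    qed
  next
    fix w assume "w \<notin> set xs"
    then show "u t (Plain w) = \<omega>0 (Plain w)"
      using ode_solution_frame[OF r t(1), of "Plain w"] start by auto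
  qed
  then show ?thesis using d(1) by blast
qed

lemma ode_solutions_gap_le:
  assumes ru: "ode_solution I xs fs R1 h u" and rv: "ode_solution I xs fs R2 h v" and h: "h > 0"
    and i: "i < length xs" and start: "u 0 (Plain (xs!i)) = v 0 (Plain (xs!i))"
    and K: "\<And>\<tau>. \<tau> \<in> {0..h} \<Longrightarrow> \<bar>teval I (fs!i) (u \<tau>) - teval I (fs!i) (v \<tau>)\<bar> \<le> K"
    and t: "t \<in> {0..h}"
  shows "\<bar>u t (Plain (xs!i)) - v t (Plain (xs!i))\<bar> \<le> K * t"
proof -
  define g where "g t = u t (Plain (xs!i)) - v t (Plain (xs!i))" for t
  have "norm (g t - g 0) \<le> K * norm (t - 0)"
  proof (rule field_differentiable_bound[where S = "{0..t}"
        and f' = "\<lambda>\<tau>. u \<tau> (Diff (xs!i)) - v \<tau> (Diff (xs!i))"])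
    fix \<tau> assume \<tau>: "\<tau> \<in> {0..t}"
    then have \<tau>h: "\<tau> \<in> {0..h}" and sub: "{0..t} \<subseteq> {0..h}" using t by auto
    show "(g has_field_derivative u \<tau> (Diff (xs!i)) - v \<tau> (Diff (xs!i))) (at \<tau> within {0..t})"
      unfolding g_def
      using has_field_derivative_subset[OF ode_solution_deriv[OF ru \<tau>h h i] sub]
        has_field_derivative_subset[OF ode_solution_deriv[OF rv \<tau>h h i] sub]
      by (rule DERIV_diff)
    show "norm (u \<tau> (Diff (xs!i)) - v \<tau> (Diff (xs!i))) \<le> K"
      using ode_solution_Diff[OF ru \<tau>h i] ode_solution_Diff[OF rv \<tau>h i] K[OF \<tau>h] by simp
  qed (use t in auto)
  then show ?thesis using start t unfolding g_def by simp
qed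

text \<open>The contraction step of Picard-Lindeloef: on an interval so short that n L h \<le> 1/2,
  the supremum M of the distance between two solutions with the same start satisfies M \<le> M/2.\<close>
lemma ode_solutions_eq_of_lipschitz:
  assumes ru: "ode_solution I xs fs R1 h u" and rv: "ode_solution I xs fs R2 h v" and h: "h > 0"
    and start: "\<And>w. u 0 (Plain w) = v 0 (Plain w)"
    and lip: "\<And>i t. i < length xs \<Longrightarrow> t \<in> {0..h} \<Longrightarrow>
      \<bar>teval I (fs!i) (u t) - teval I (fs!i) (v t)\<bar> \<le> L * xdist xs (u t) (v t)"
    and L: "L \<ge> 0" and small: "real (length xs) * L * h \<le> 1/2"
    and bdd: "bdd_above ((\<lambda>t. xdist xs (u t) (v t)) ` {0..h})"
  shows "\<forall>t\<in>{0..h}. \<forall>i<length xs. u t (Plain (xs!i)) = v t (Plain (xs!i))"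
proof -
  define e where "e t = xdist xs (u t) (v t)" for t
  define M where "M = Sup (e ` {0..h})"
  have eM: "e t \<le> M" if "t \<in> {0..h}" for t
    unfolding M_def using bdd that by (intro cSup_upper) (auto simp: e_def)
  have M: "M \<ge> 0" using eM[of 0] xdist_nonneg[of xs "u 0" "v 0"] h unfolding e_def by simp
  have gap: "\<bar>u t (Plain (xs!i)) - v t (Plain (xs!i))\<bar> \<le> L * M * h"
    if i: "i < length xs" and t: "t \<in> {0..h}" for i t
  proof -
    have "\<bar>teval I (fs!i) (u \<tau>) - teval I (fs!i) (v \<tau>)\<bar> \<le> L * M" if "\<tau> \<in> {0..h}" for \<tau>
      using lip[OF i that] mult_left_mono[OF eM[OF that] L] unfolding e_def by linarith
    from ode_solutions_gap_le[OF ru rv h i start this t]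
    have "\<bar>u t (Plain (xs!i)) - v t (Plain (xs!i))\<bar> \<le> L * M * t" .
    also have "\<dots> \<le> L * M * h" using t L M by (intro mult_left_mono) auto
    finally show ?thesis .
  qed
  have "e t \<le> M / 2" if t: "t \<in> {0..h}" for t
  proof -
    have "e t \<le> (\<Sum>i<length xs. L * M * h)"
      unfolding e_def xdist_def by (rule sum_mono) (use gap t in auto)
    also have "\<dots> = (real (length xs) * L * h) * M" by (simp add: algebra_simps)
    also have "\<dots> \<le> (1/2) * M" using small M by (rule mult_right_mono)
    finally show ?thesis by simp
  qed
  then have "M \<le> M / 2" unfolding M_def using h by (intro cSup_least) auto
  then have "M = 0" using M by simp
  then have "\<bar>u t (Plain (xs!i)) - v t (Plain (xs!i))\<bar> = 0" if "i < length xs" "t \<in> {0..h}" for i t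
    using member_le_sum[of i "{..<length xs}" "\<lambda>i. \<bar>u t (Plain (xs!i)) - v t (Plain (xs!i))\<bar>"]
      eM[OF that(2)] that(1) unfolding e_def xdist_def by (simp add: order_antisym)
  then show ?thesis by simp
qed

lemma ode_solutions_locally_unique:
  assumes sm: "\<And>g. smooth_fn (ar g) (I g)"
    and len: "length fs = length xs"
    and fs: "\<And>f. f \<in> set fs \<Longrightarrow> dfree f \<and> twf ar f"
    and ru: "ode_solution I xs fs R1 T1 u" and rv: "ode_solution I xs fs R2 T2 v"
    and T1: "T1 > 0" and T2: "T2 > 0"
    and start: "\<And>w. u 0 (Plain w) = v 0 (Plain w)"
  shows "\<exists>h>0. h \<le> T1 \<and> h \<le> T2 \<and> (\<forall>s\<in>{0..h}. \<forall>w. u s (Plain w) = v s (Plain w))"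
proof -
  define \<omega>0 where "\<omega>0 = u 0"
  have "\<And>f. f \<in> set (map (teval I) fs) \<Longrightarrow> xlipschitz_at xs \<omega>0 f"
    using teval_xlipschitz_at[of ar I, OF sm] fs by auto
  from xlipschitz_at_uniform[OF this] obtain \<delta> L where \<delta>: "\<delta> > 0" and L: "L \<ge> 0"
    and lip: "\<forall>a b. in_xbox xs \<delta> \<omega>0 a \<longrightarrow> in_xbox xs \<delta> \<omega>0 b \<longrightarrow>
      (\<forall>f\<in>set (map (teval I) fs). \<bar>f a - f b\<bar> \<le> L * xdist xs a b)"
    by blast
  obtain d1 where d1: "d1 > 0" "\<forall>t\<in>{0..T1}. t < d1 \<longrightarrow> in_xbox xs \<delta> \<omega>0 (u t)"
    using ode_solution_in_xbox_near_start[OF ru T1 \<delta>] unfolding \<omega>0_def by blast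
  obtain d2 where d2: "d2 > 0" "\<forall>t\<in>{0..T2}. t < d2 \<longrightarrow> in_xbox xs \<delta> \<omega>0 (v t)"
    using ode_solution_in_xbox_near_start[OF rv T2 \<delta>, of \<omega>0] start unfolding \<omega>0_def by metis
  define n where "n = real (length xs)"
  define h where "h = min (min (d1/2) (d2/2)) (min (min T1 T2) (1 / (2 * (n * L + 1))))"
  have nL: "n * L \<ge> 0" unfolding n_def using L by simp
  have h: "h > 0" "h \<le> T1" "h \<le> T2" unfolding h_def using d1 d2 T1 T2 nL by auto
  have box: "in_xbox xs \<delta> \<omega>0 (u t)" "in_xbox xs \<delta> \<omega>0 (v t)" if "t \<in> {0..h}" for t
    using that h d1 d2 unfolding h_def by auto
  have "n * L * h \<le> 1/2"
  proof -
    have "(n * L + 1) * h \<le> (n * L + 1) * (1 / (2 * (n * L + 1)))"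
      using nL unfolding h_def by (intro mult_left_mono) auto
    also have "\<dots> = 1/2" using nL by simp
    finally show ?thesis using h by (simp add: algebra_simps)
  qed
  moreover have "\<bar>teval I (fs!i) (u t) - teval I (fs!i) (v t)\<bar> \<le> L * xdist xs (u t) (v t)"
    if "i < length xs" "t \<in> {0..h}" for i t
    using lip box[OF that(2)] that(1) len by auto
  moreover have "bdd_above ((\<lambda>t. xdist xs (u t) (v t)) ` {0..h})"
    using xdist_le_in_xbox box unfolding bdd_above_def by blast
  ultimately have "\<forall>t\<in>{0..h}. \<forall>i<length xs. u t (Plain (xs!i)) = v t (Plain (xs!i))"
    using ode_solutions_eq_of_lipschitz[OF ode_solution_prefix[OF ru _ h(2)] ode_solution_prefix[OF rv _ h(3)]
        h(1) start _ L] h(1) unfolding n_def by auto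
  moreover have "u t (Plain w) = v t (Plain w)" if "t \<in> {0..h}" "w \<notin> set xs" for t w
    using box[OF that(1)] that(2) by (simp add: in_xbox_def)
  ultimately show ?thesis using h by (metis in_set_conv_nth)
qed

section \<open>Differential ghosts\<close>

lemma first_failure_time:
  fixes T :: real
  assumes "0 \<le> T" and "\<not> p T"
  obtains t0 where "t0 \<in> {0..T}" and "\<And>t. 0 \<le> t \<Longrightarrow> t < t0 \<Longrightarrow> p t"
    and "\<And>e. e > 0 \<Longrightarrow> \<exists>t\<in>{t0..<t0 + e}. t \<le> T \<and> \<not> p t"
proof -
  define S where "S = {t\<in>{0..T}. \<not> p t}"
  have "T \<in> S" using assms unfolding S_def by simp
  have bdd: "bdd_below S" unfolding S_def bdd_below_def by auto
  show ?thesis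
  proof (rule that[of "Inf S"])
    have "0 \<le> Inf S" using \<open>T \<in> S\<close> by (intro cInf_greatest) (auto simp: S_def)
    moreover have "Inf S \<le> T" using cInf_lower[OF \<open>T \<in> S\<close> bdd] .
    ultimately show "Inf S \<in> {0..T}" by simp
    show "p t" if "0 \<le> t" "t < Inf S" for t
    proof (rule ccontr)
      assume "\<not> p t"
      with that \<open>Inf S \<le> T\<close> have "t \<in> S" unfolding S_def by simp
      then show False using cInf_lower[OF _ bdd, of t] that(2) by simp
    qed
    show "\<exists>t\<in>{Inf S..<Inf S + e}. t \<le> T \<and> \<not> p t" if "e > 0" for e
    proof -
      have "S \<noteq> {}" using \<open>T \<in> S\<close> by blast
      moreover have "Inf S < Inf S + e" using that by simp
      ultimately obtain t where "t \<in> S" "t < Inf S + e"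
        using cInf_less_iff[OF _ bdd] by blast
      moreover have "Inf S \<le> t" using cInf_lower[OF \<open>t \<in> S\<close> bdd] .
      ultimately show ?thesis unfolding S_def by auto
    qed
  qed
qed

locale ode_with_ghosts =
  fixes I :: "'f \<Rightarrow> real list \<Rightarrow> real" and ar :: "'f \<Rightarrow> nat"
    and xs ys :: "'v list" and fs :: "('v, 'f) trm list" and P Q :: "('v, 'f) fml"
  assumes smooth: "\<And>g. smooth_fn (ar g) (I g)"
    and len_fs: "length fs = length xs"
    and fs_df: "\<And>f. f \<in> set fs \<Longrightarrow> dfree f \<and> twf ar f"
    and evolves: "\<And>\<omega>. \<exists>i<length fs. teval I (fs ! i) \<omega> \<noteq> 0"
    and P_sa: "semianalytic P" and Q_sa: "semianalytic Q"
    and len_ys: "length ys = length xs"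
    and ys_dist: "distinct ys"
    and ys_fresh: "\<And>y. y \<in> set ys \<Longrightarrow> fresh_in y (Box xs fs Q P)"
begin

abbreviation ghost_vars :: "'v var set" where
  "ghost_vars \<equiv> Plain ` set ys"

abbreviation at_ghost :: "('v, 'f) fml" where
  "at_ghost \<equiv> EqV xs ys"

abbreviation ghost_post :: "('v, 'f) fml" where
  "ghost_post \<equiv> Imp at_ghost (And P (Imp (Dia xs fs (Or Q at_ghost) (NeqV xs ys))
                                          (Dia xs fs (Or P at_ghost) (NeqV xs ys))))"

lemma ghost_not_in_fvars: "y \<in> set ys \<Longrightarrow> Plain y \<notin> fvars (Box xs fs Q P)"
  using ys_fresh unfolding fresh_in_def by blast

lemma ys_notin_xs: "y \<in> set ys \<Longrightarrow> y \<notin> set xs"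
  using ghost_not_in_fvars by auto

lemma sem_at_ghost:
  "sem I at_ghost s \<longleftrightarrow> (\<forall>i<length xs. s (Plain (xs ! i)) = s (Plain (ys ! i)))"
  using sem_EqV[OF len_ys[symmetric]] .

lemma sem_P_override [simp]: "sem I P (override_on s c ghost_vars) = sem I P s"
  using ghost_not_in_fvars by (intro sem_override_on_fresh[OF P_sa]) auto

lemma sem_Q_override [simp]: "sem I Q (override_on s c ghost_vars) = sem I Q s"
  using ghost_not_in_fvars by (intro sem_override_on_fresh[OF Q_sa]) auto

lemma sem_at_ghost_override:
  "(\<And>j. j < length xs \<Longrightarrow> c (Plain (ys ! j)) = s (Plain (xs ! j))) \<Longrightarrow>
   sem I at_ghost (override_on s c ghost_vars)"
  unfolding sem_at_ghost
proof (intro allI impI)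
  fix i assume i: "i < length xs"
  assume c: "\<And>j. j < length xs \<Longrightarrow> c (Plain (ys ! j)) = s (Plain (xs ! j))"
  have "Plain (xs ! i) \<notin> ghost_vars" using ys_notin_xs nth_mem[OF i] by blast
  moreover have "Plain (ys ! i) \<in> ghost_vars" using i len_ys by simp
  ultimately show "override_on s c ghost_vars (Plain (xs ! i)) = override_on s c ghost_vars (Plain (ys ! i))"
    using c[OF i] by simp
qed

lemma ode_solution_override_ghosts:
  assumes "ode_solution I xs fs R T \<phi>"
    and "\<And>\<zeta>. \<zeta> \<in> {0..T} \<Longrightarrow> R (\<phi> \<zeta>) \<Longrightarrow> R' (override_on (\<phi> \<zeta>) c ghost_vars)"
  shows "ode_solution I xs fs R' T (\<lambda>t. override_on (\<phi> t) c ghost_vars)"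
proof (rule ode_solution_override_on)
  show "ode_solution I xs fs R T \<phi>" by (rule assms(1))
  show "\<And>\<zeta>. \<zeta> \<in> {0..T} \<Longrightarrow> R (\<phi> \<zeta>) \<Longrightarrow> R' (override_on (\<phi> \<zeta>) c ghost_vars)"
    by (rule assms(2))
  show "Plain v \<notin> ghost_vars \<and> Diff v \<notin> ghost_vars" if "v \<in> set xs" for v
    using that ys_notin_xs by auto
  show "tvars (fs ! i) \<inter> ghost_vars = {}" if "i < length xs" for i
    using that len_fs ghost_not_in_fvars by fastforce
qed

lemma box_override_ghosts:
  assumes box: "sem I (Box xs fs Q P) \<omega>" and agree: "\<forall>z. z \<notin> ghost_vars \<longrightarrow> \<omega>' z = \<omega> z"
  shows "sem I (Box xs fs Q P) \<omega>'"
proof (unfold sem.simps(6), intro allI impI)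
  fix \<nu> assume "ode_rel I xs fs (sem I Q) \<omega>' \<nu>"
  then obtain T \<phi> where r: "ode_solution I xs fs (sem I Q) T \<phi>"
    and st: "\<forall>z. z \<notin> Diff ` set xs \<longrightarrow> \<phi> 0 z = \<omega>' z" and en: "\<phi> T = \<nu>"
    unfolding ode_rel_iff_solution by blast
  have "ode_solution I xs fs (sem I Q) T (\<lambda>t. override_on (\<phi> t) \<omega> ghost_vars)"
    using r by (rule ode_solution_override_ghosts) simp
  moreover have "\<forall>z. z \<notin> Diff ` set xs \<longrightarrow> override_on (\<phi> 0) \<omega> ghost_vars z = \<omega> z"
    using st agree by (simp add: override_on_def)
  ultimately have "ode_rel I xs fs (sem I Q) \<omega> (override_on \<nu> \<omega> ghost_vars)"
    unfolding ode_rel_iff_solution using en by blast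
  then have "sem I P (override_on \<nu> \<omega> ghost_vars)" using box unfolding sem.simps(6) by blast
  then show "sem I P \<nu>" by simp
qed

text \<open>The ODE moves some x_i while the ghosts y stay put.\<close>
lemma ode_solution_leaves_ghost:
  assumes r: "ode_solution I xs fs R T \<psi>" and T: "T > 0" and E: "sem I at_ghost (\<psi> 0)"
  shows "\<exists>h>0. h \<le> T \<and> (\<forall>s\<in>{0<..h}. \<not> sem I at_ghost (\<psi> s))"
proof -
  have 0: "0 \<in> {0..T}" using T by simp
  obtain i where i: "i < length xs" "teval I (fs ! i) (\<psi> 0) \<noteq> 0"
    using evolves[of "\<psi> 0"] len_fs by auto
  then have "\<psi> 0 (Diff (xs ! i)) \<noteq> 0" using ode_solution_Diff[OF r 0 i(1)] by simp
  from has_real_derivative_nonzero_moves[OF ode_solution_deriv[OF r 0 T i(1)] this T]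
  obtain h where h: "h > 0" "h \<le> T"
    and moves: "\<forall>s\<in>{0<..h}. \<psi> s (Plain (xs ! i)) \<noteq> \<psi> 0 (Plain (xs ! i))"
    by blast
  have "ys ! i \<notin> set xs" using ys_notin_xs i(1) len_ys by simp
  then have ghost_fixed: "\<psi> s (Plain (ys ! i)) = \<psi> 0 (Plain (ys ! i))" if "s \<in> {0..T}" for s
    using ode_solution_frame[OF r that] by auto
  have "\<not> sem I at_ghost (\<psi> s)" if "s \<in> {0<..h}" for s
  proof -
    have "\<psi> 0 (Plain (xs ! i)) = \<psi> 0 (Plain (ys ! i))" using E i(1) unfolding sem_at_ghost by blast
    then have "\<psi> s (Plain (xs ! i)) \<noteq> \<psi> s (Plain (ys ! i))"
      using moves that ghost_fixed[of s] h(2) by auto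
    then show ?thesis using i(1) unfolding sem_at_ghost by blast
  qed
  then show ?thesis using h by blast
qed

lemma ghost_dia_transfer:
  assumes box: "sem I (Box xs fs Q P) \<omega>"
    and r: "ode_solution I xs fs (sem I Q) T \<phi>" and st: "\<forall>z. z \<notin> Diff ` set xs \<longrightarrow> \<phi> 0 z = \<omega> z"
    and E: "sem I at_ghost (\<phi> T)"
    and dia: "sem I (Dia xs fs (Or Q at_ghost) (NeqV xs ys)) (\<phi> T)"
  shows "sem I (Dia xs fs (Or P at_ghost) (NeqV xs ys)) (\<phi> T)"
proof -
  have TT: "T \<in> {0..T}" using ode_solution_nonneg[OF r] by simp
  obtain T2 \<psi> where r2: "ode_solution I xs fs (sem I (Or Q at_ghost)) T2 \<psi>"
    and st2: "\<forall>z. z \<notin> Diff ` set xs \<longrightarrow> \<psi> 0 z = \<phi> T z" and nE: "\<not> sem I at_ghost (\<psi> T2)"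
    using dia unfolding sem.simps ode_rel_iff_solution by auto
  have start: "\<psi> 0 = \<phi> T"
    by (rule ode_solution_start[OF r2 len_fs]) (use fs_df st2 ode_solution_Diff[OF r TT] in auto)
  have "T2 \<noteq> 0" using start nE E by auto
  then have T2: "T2 > 0" using ode_solution_nonneg[OF r2] by simp
  obtain h where h: "h > 0" "h \<le> T2" and leave: "\<forall>s\<in>{0<..h}. \<not> sem I at_ghost (\<psi> s)"
    using ode_solution_leaves_ghost[OF r2 T2] E start by auto
  have Q: "sem I Q (\<psi> s)" if "s \<in> {0..h}" for s
    using that leave ode_solution_constraint[OF r2, of s] ode_solution_constraint[OF r TT] start h(2)
    by (cases "s = 0") auto
  have "sem I P (\<psi> s)" if s: "s \<in> {0<..h}" for s
  proof -
    have "ode_solution I xs fs (sem I Q) s \<psi>"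
      using s h Q by (intro ode_solution_restrict[OF r2]) auto
    from ode_solution_append[OF r this start]
    have "ode_rel I xs fs (sem I Q) \<omega> ((\<lambda>t. if t \<le> T then \<phi> t else \<psi> (t - T)) (T + s))"
      unfolding ode_rel_iff_solution using st ode_solution_nonneg[OF r]
      by (intro exI[of _ "T + s"] exI[of _ "\<lambda>t. if t \<le> T then \<phi> t else \<psi> (t - T)"]) simp
    then have "sem I P (if T + s \<le> T then \<phi> (T + s) else \<psi> (T + s - T))"
      using box unfolding sem.simps(6) by blast
    then show ?thesis using s by simp
  qed
  then have "ode_solution I xs fs (sem I (Or P at_ghost)) h \<psi>"
    using h start E by (intro ode_solution_restrict[OF r2]) (auto simp: less_eq_real_def)
  then have "ode_rel I xs fs (sem I (Or P at_ghost)) (\<phi> T) (\<psi> h)"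
    unfolding ode_rel_iff_solution using st2 by blast
  moreover have "sem I (NeqV xs ys) (\<psi> h)" using leave h(1) by simp
  ultimately show ?thesis unfolding sem.simps(7) by blast
qed

lemma box_imp_ghost_box:
  assumes box: "sem I (Box xs fs Q P) \<omega>"
  shows "sem I (Box xs fs (And Q (Or P at_ghost)) ghost_post) \<omega>"
proof (unfold sem.simps(6), intro allI impI)
  fix \<nu> assume "ode_rel I xs fs (sem I (And Q (Or P at_ghost))) \<omega> \<nu>"
  then obtain T \<phi> where r: "ode_solution I xs fs (sem I (And Q (Or P at_ghost))) T \<phi>"
    and st: "\<forall>z. z \<notin> Diff ` set xs \<longrightarrow> \<phi> 0 z = \<omega> z" and en: "\<phi> T = \<nu>"
    unfolding ode_rel_iff_solution by blast
  have rQ: "ode_solution I xs fs (sem I Q) T \<phi>" by (rule ode_solution_mono[OF r]) simp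
  then have "sem I P \<nu>" using box st en unfolding sem.simps ode_rel_iff_solution by blast
  moreover have "sem I (Dia xs fs (Or P at_ghost) (NeqV xs ys)) \<nu>"
    if "sem I at_ghost \<nu>" "sem I (Dia xs fs (Or Q at_ghost) (NeqV xs ys)) \<nu>"
    using ghost_dia_transfer[OF box rQ st] that en by blast
  ultimately show "sem I ghost_post \<nu>" unfolding sem_Imp sem.simps(3) by blast
qed

lemma ghost_run_to_first_failure:
  assumes r: "ode_solution I xs fs (sem I Q) T \<phi>" and t0: "t0 \<in> {0..T}"
    and before: "\<And>t. 0 \<le> t \<Longrightarrow> t < t0 \<Longrightarrow> sem I P (\<phi> t)"
    and c: "\<And>j. j < length xs \<Longrightarrow> c (Plain (ys ! j)) = \<phi> t0 (Plain (xs ! j))"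
  shows "ode_solution I xs fs (sem I (And Q (Or P at_ghost))) t0 (\<lambda>t. override_on (\<phi> t) c ghost_vars)"
proof (rule ode_solution_override_ghosts)
  show "ode_solution I xs fs (sem I Q) t0 \<phi>" using ode_solution_prefix[OF r] t0 by auto
  fix \<zeta> assume "\<zeta> \<in> {0..t0}" "sem I Q (\<phi> \<zeta>)"
  then show "sem I (And Q (Or P at_ghost)) (override_on (\<phi> \<zeta>) c ghost_vars)"
  proof (cases "\<zeta> = t0")
    case True
    have "sem I at_ghost (override_on (\<phi> t0) c ghost_vars)"
      by (rule sem_at_ghost_override, rule c)
    then show ?thesis using True \<open>sem I Q (\<phi> \<zeta>)\<close> by simp
  next
    case False
    then show ?thesis using before \<open>\<zeta> \<in> {0..t0}\<close> \<open>sem I Q (\<phi> \<zeta>)\<close> by simp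
  qed
qed

lemma ghost_dia_of_solution:
  assumes r: "ode_solution I xs fs (sem I Q) T u" and T: "T > 0" and E: "sem I at_ghost (u 0)"
  shows "sem I (Dia xs fs (Or Q at_ghost) (NeqV xs ys)) (u 0)"
proof -
  obtain h where h: "h > 0" "h \<le> T" and leave: "\<forall>s\<in>{0<..h}. \<not> sem I at_ghost (u s)"
    using ode_solution_leaves_ghost[OF r T E] by blast
  have "ode_solution I xs fs (sem I (Or Q at_ghost)) h u"
    using h ode_solution_constraint[OF r] by (intro ode_solution_restrict[OF r]) auto
  then have "ode_rel I xs fs (sem I (Or Q at_ghost)) (u 0) (u h)"
    unfolding ode_rel_iff_solution by blast
  moreover have "sem I (NeqV xs ys) (u h)" using leave h(1) by simp
  ultimately show ?thesis unfolding sem.simps(7) by blast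
qed

text \<open>Uniqueness of solutions makes the P-run promised by the ghost box follow u.\<close>
lemma P_after_ghost_start:
  assumes ru: "ode_solution I xs fs R T u" and T: "T > 0" and E: "sem I at_ghost (u 0)"
    and dia: "sem I (Dia xs fs (Or P at_ghost) (NeqV xs ys)) (u 0)"
  shows "\<exists>h>0. \<forall>s\<in>{0<..h}. sem I P (u s)"
proof -
  obtain h1 where h1: "h1 > 0" "h1 \<le> T" and leave: "\<forall>s\<in>{0<..h1}. \<not> sem I at_ghost (u s)"
    using ode_solution_leaves_ghost[OF ru T E] by blast
  obtain T2 \<psi> where r2: "ode_solution I xs fs (sem I (Or P at_ghost)) T2 \<psi>"
    and st2: "\<forall>z. z \<notin> Diff ` set xs \<longrightarrow> \<psi> 0 z = u 0 z" and nE: "\<not> sem I at_ghost (\<psi> T2)"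
    using dia unfolding sem.simps ode_rel_iff_solution by auto
  have plain0: "\<And>w. \<psi> 0 (Plain w) = u 0 (Plain w)" using st2 by auto
  have "T2 \<noteq> 0" using nE E plain0 unfolding sem_at_ghost by auto
  then have T2: "T2 > 0" using ode_solution_nonneg[OF r2] by simp
  obtain h where h: "h > 0" "h \<le> T2" and same: "\<forall>s\<in>{0..h}. \<forall>w. \<psi> s (Plain w) = u s (Plain w)"
    using ode_solutions_locally_unique[OF smooth len_fs fs_df r2 ru T2 T plain0] by blast
  have "sem I P (u s)" if s: "s \<in> {0<..min h h1}" for s
  proof -
    have "s \<in> {0..h}" and s0T2: "s \<in> {0..T2}" using s h(2) by auto
    then have same_s: "\<psi> s (Plain w) = u s (Plain w)" for w using same by blast
    have "\<not> sem I at_ghost (u s)" using leave s by simp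
    then have "\<not> sem I at_ghost (\<psi> s)" unfolding sem_at_ghost same_s .
    then have "sem I P (\<psi> s)" using ode_solution_constraint[OF r2 s0T2] by simp
    then show ?thesis using sem_semianalytic_Plain_cong[OF P_sa, of "\<psi> s" "u s"] same_s by simp
  qed
  moreover have "min h h1 > 0" using h(1) h1(1) by simp
  ultimately show ?thesis by blast
qed

lemma ghost_box_imp_box:
  assumes ghost: "\<And>\<omega>'. \<forall>z. z \<notin> ghost_vars \<longrightarrow> \<omega>' z = \<omega> z \<Longrightarrow>
      sem I (Box xs fs (And Q (Or P at_ghost)) ghost_post) \<omega>'"
  shows "sem I (Box xs fs Q P) \<omega>"
proof (unfold sem.simps(6), intro allI impI, rule ccontr)
  fix \<nu> assume "ode_rel I xs fs (sem I Q) \<omega> \<nu>" and "\<not> sem I P \<nu>"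
  then obtain T \<phi> where r: "ode_solution I xs fs (sem I Q) T \<phi>"
    and st: "\<forall>z. z \<notin> Diff ` set xs \<longrightarrow> \<phi> 0 z = \<omega> z" and nP: "\<not> sem I P (\<phi> T)"
    unfolding ode_rel_iff_solution by blast
  obtain t0 where t0: "t0 \<in> {0..T}" and before: "\<And>t. 0 \<le> t \<Longrightarrow> t < t0 \<Longrightarrow> sem I P (\<phi> t)"
    and fails: "\<And>e. e > 0 \<Longrightarrow> \<exists>t\<in>{t0..<t0 + e}. t \<le> T \<and> \<not> sem I P (\<phi> t)"
    using first_failure_time[of T "\<lambda>t. sem I P (\<phi> t)"] ode_solution_nonneg[OF r] nP by blast
  define c where "c z = (case z of Plain y \<Rightarrow> (case map_of (zip ys xs) y of
      Some x \<Rightarrow> \<phi> t0 (Plain x) | None \<Rightarrow> 0) | Diff y \<Rightarrow> 0)" for z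
  have c: "c (Plain (ys ! j)) = \<phi> t0 (Plain (xs ! j))" if "j < length xs" for j
    unfolding c_def using map_of_zip_nth[of ys xs j] len_ys ys_dist that by simp
  define u where "u s = override_on (\<phi> (s + t0)) c ghost_vars" for s
  have E: "sem I at_ghost (u 0)" unfolding u_def by (simp, rule sem_at_ghost_override, rule c)
  have "\<forall>z. z \<notin> Diff ` set xs \<longrightarrow>
      override_on (\<phi> 0) c ghost_vars z = override_on \<omega> c ghost_vars z"
    using st by (simp add: override_on_def)
  then have "ode_rel I xs fs (sem I (And Q (Or P at_ghost))) (override_on \<omega> c ghost_vars) (u 0)"
    unfolding ode_rel_iff_solution u_def using ghost_run_to_first_failure[OF r t0 before c] by auto
  then have post: "sem I ghost_post (u 0)" using ghost[of "override_on \<omega> c ghost_vars"] by simp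
  then have "sem I P (\<phi> t0)" using E unfolding u_def by simp
  then have "t0 < T" using t0 nP by (cases "t0 = T") auto
  have ru: "ode_solution I xs fs (sem I Q) (T - t0) u"
    unfolding u_def using ode_solution_shift[OF r] t0 by (intro ode_solution_override_ghosts) auto
  have "sem I (Dia xs fs (Or P at_ghost) (NeqV xs ys)) (u 0)"
    using post E ghost_dia_of_solution[OF ru _ E] \<open>t0 < T\<close> by simp
  from P_after_ghost_start[OF ru _ E this] \<open>t0 < T\<close>
  obtain h where "h > 0" and P_after: "\<forall>s\<in>{0<..h}. sem I P (\<phi> (s + t0))"
    unfolding u_def by auto
  obtain t where "t \<in> {t0..<t0 + h}" "\<not> sem I P (\<phi> t)" using fails[OF \<open>h > 0\<close>] by blast
  then show False using P_after[rule_format, of "t - t0"] \<open>sem I P (\<phi> t0)\<close> by (cases "t = t0") auto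
qed

end

theorem lemmaA2:
  fixes I :: "'f::finite \<Rightarrow> real list \<Rightarrow> real"
    and ar :: "'f \<Rightarrow> nat"
    and xs ys :: "'v list"
    and fs :: "('v, 'f) trm list"
    and P Q :: "('v, 'f) fml"
  assumes smooth: "\<And>g. smooth_fn (ar g) (I g)"
    and xs_ne: "xs \<noteq> []"
    and xs_dist: "distinct xs"
    and len_fs: "length fs = length xs"
    and fs_df: "\<And>f. f \<in> set fs \<Longrightarrow> dfree f \<and> twf ar f"
    and evolves: "\<And>\<omega>. \<exists>i<length fs. teval I (fs ! i) \<omega> \<noteq> 0"
    and P_sa: "semianalytic P" and P_wf: "fwf ar P"
    and Q_sa: "semianalytic Q" and Q_wf: "fwf ar Q"
    and len_ys: "length ys = length xs"
    and ys_dist: "distinct ys"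
    and ys_fresh: "\<And>y. y \<in> set ys \<Longrightarrow> fresh_in y (Box xs fs Q P)"
  shows "valid I
    (Iff (Box xs fs Q P)
         (ForallV ys
           (Box xs fs (And Q (Or P (EqV xs ys)))
              (Imp (EqV xs ys)
                 (And P
                    (Imp (Dia xs fs (Or Q (EqV xs ys)) (NeqV xs ys))
                         (Dia xs fs (Or P (EqV xs ys)) (NeqV xs ys))))))))"
proof -
  interpret ode_with_ghosts I ar xs ys fs P Q
    using smooth len_fs fs_df evolves P_sa Q_sa len_ys ys_dist ys_fresh by unfold_locales
  have box_iff: "sem I (Box xs fs Q P) \<omega> \<longleftrightarrow>
      (\<forall>\<omega>'. (\<forall>z. z \<notin> ghost_vars \<longrightarrow> \<omega>' z = \<omega> z) \<longrightarrow>
        sem I (Box xs fs (And Q (Or P at_ghost)) ghost_post) \<omega>')" for \<omega>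
  proof
    assume "sem I (Box xs fs Q P) \<omega>"
    then show "\<forall>\<omega>'. (\<forall>z. z \<notin> ghost_vars \<longrightarrow> \<omega>' z = \<omega> z) \<longrightarrow>
        sem I (Box xs fs (And Q (Or P at_ghost)) ghost_post) \<omega>'"
      using box_override_ghosts box_imp_ghost_box by blast
  next
    assume "\<forall>\<omega>'. (\<forall>z. z \<notin> ghost_vars \<longrightarrow> \<omega>' z = \<omega> z) \<longrightarrow>
        sem I (Box xs fs (And Q (Or P at_ghost)) ghost_post) \<omega>'"
    then show "sem I (Box xs fs Q P) \<omega>" by (intro ghost_box_imp_box) blast
  qed
  show ?thesis unfolding valid_def sem_Iff sem_ForallV by (simp only: box_iff simp_thms)
qed

end
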